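(* Let $w\in W$, $i\in\{1,\ldots,r\}$, $n=\ell(w)$, and let $e=(0,\ldots,0,n,0,\ldots,0)$ be the $r$-tuple with $n$ in position $i$. The following are equivalent: (1) $C_{w,e}=1$; (2) $(\Phi^+\cap w\Phi^-,e)$ is an excessive cluster; (3) $(\Phi^+\cap w\Phi^-,e)$ is an excessively clusterizable A-configuration; (4) there is a path-originating sequence $0=\beta_0,\beta_1,\ldots,\beta_n$ with $\beta_1=\alpha_i$ (if $n>0$) and $\Phi^+\cap w\Phi^-=\{\beta_1,\ldots,\beta_n\}$; (5) there is a path-originating sequence $0=\beta_0,\beta_1,\ldots,\beta_n$ with $\beta_1=\alpha_i$ (if $n>0$) and $w=\sigma_{\beta_n}\cdots\sigma_{\beta_1}$. Moreover, the sequences in (4) and (5) are unique and coincide.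
   Context: Standard setup: $G$ is a simple algebraic group over $\mathbb C$ with simply laced Dynkin diagram, of rank $r$; $B$ a Borel subgroup, fixed maximal torus. $\Phi$ the roots, $\Phi^+$ positive roots, $\Phi^-=-\Phi^+$, $\Pi=\{\alpha_1,\ldots,\alpha_r\}$ simple roots, $W$ Weyl group, $\sigma_\alpha$ reflections, $\ell$ length, $w_0$ longest element; scalar product normalized with $(\alpha,\alpha)=2$. $Z_w$ is the Chow class of $\overline{Bw_0w^{-1}B/B}\subseteq G/B$, $D_i=Z_{\sigma_{\alpha_i}}$, and $D_1^{n_1}\cdots D_r^{n_r}=\sum_w C_{w,n_1,\ldots,n_r}Z_w$. $\mathrm{supp}\,v$ for $v=\sum a_j\alpha_j$ is $\{\alpha_j:a_j\ne0\}$. For $A\subseteq\Phi^+$ and $I\subseteq\{1,\ldots,r\}$, $R_I(A)$ is the set of $\alpha\in A$ whose support contains some $\alpha_j$, $j\in I$. An A-configuration is $(A,n_1,\ldots,n_r)$ with $A\subseteq\Phi^+$, $n_j\in\mathbb Z_{\ge0}$, $\sum n_j=|A|$. A set $A\subseteq\Phi^+$ is an $I$-cluster if: (1) coefficients of $\alpha_j$, $j\in I$, in elements of $A$ are $\le1$; (2) $(\alpha,\beta)\ne-1$ for distinct $\alpha,\beta\in A$; (3) if $\alpha,\beta\in A$, $(\alpha,\beta)=0$, then $\mathrm{supp}\,\alpha\cap\mathrm{supp}\,\beta$ contains no $\alpha_j$ with $j\in I$. With $I=\{j:n_j>0\}$, $(A,n)$ is excessive if $|R_I(A)|=\sum n_j$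 and $|R_J(A)|>\sum_{j\in J}n_j$ for all nonempty $J\subsetneq I$; it is an excessive cluster if moreover $A$ is an $I$-cluster. Excessively clusterizable (recursively on $|A|$): $(\varnothing,0,\ldots,0)$ is; for $|A|>0$, $(A,n)$ is if there is nonempty $I$ with $n_j>0$ for $j\in I$ such that with $k_j=n_j$ ($j\in I$), $k_j=0$ otherwise, $|R_I(A)|=\sum k_j$, $(R_I(A),k)$ is an excessive cluster and $(A\setminus R_I(A),n-k)$ is excessively clusterizable. A sequence $0=\beta_0,\beta_1,\ldots,\beta_k$ with $\beta_1,\ldots,\beta_k\in\Phi^+$ is path-originating if each $\beta_j-\beta_{j-1}$ is a simple root $\alpha_{i_j}$ ($1\le j\le k$), with $(\alpha_{i_j},\alpha_{i_{j+1}})=-1$ and $(\alpha_{i_j},\alpha_{i_{j'}})=0$ whenever $|j-j'|>1$ (equivalently, $i_1,\ldots,i_k$ is a simple path in the Dynkin diagram and $\beta_j=\alpha_{i_1}+\cdots+\alpha_{i_j}$). *)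

theory Defs
  imports Main
begin

text \<open>Root lattice vectors: coordinates with respect to the simple roots
  alpha_0, ..., alpha_(r-1) (0-based indexing of simple roots).
  A Cartan matrix A (indices below r) determines the scalar product.\<close>

type_synonym vec = "nat \<Rightarrow> int"
type_synonym weyl = "vec \<Rightarrow> vec"

definition simple :: "nat \<Rightarrow> vec" where
  "simple i = (\<lambda>j. if j = i then 1 else 0)"

definition form :: "nat \<Rightarrow> (nat \<Rightarrow> nat \<Rightarrow> int) \<Rightarrow> vec \<Rightarrow> vec \<Rightarrow> int" where
  "form r A u v = (\<Sum>j<r. \<Sum>k<r. u j * A j k * v k)"

definition simply_laced_cartan :: "nat \<Rightarrow> (nat \<Rightarrow> nat \<Rightarrow> int) \<Rightarrow> bool" where
  "simply_laced_cartan r A \<longleftrightarrow>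
     r \<ge> 1 \<and>
     (\<forall>i<r. A i i = 2) \<and>
     (\<forall>i<r. \<forall>j<r. A i j = A j i) \<and>
     (\<forall>i<r. \<forall>j<r. i \<noteq> j \<longrightarrow> A i j = 0 \<or> A i j = -1) \<and>
     (\<forall>v::vec. (\<forall>j\<ge>r. v j = 0) \<and> v \<noteq> (\<lambda>_. 0) \<longrightarrow> form r A v v > 0) \<and>
     (\<forall>i<r. \<forall>j<r. (i, j) \<in> {(a, b). a < r \<and> b < r \<and> A a b = -1}\<^sup>*)"

text \<open>Reflection sigma_beta (simply laced: beta coroot = beta).\<close>
definition refl :: "nat \<Rightarrow> (nat \<Rightarrow> nat \<Rightarrow> int) \<Rightarrow> vec \<Rightarrow> weyl" where
  "refl r A \<beta> = (\<lambda>v j. v j - form r A v \<beta> * \<beta> j)"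

definition word_elem :: "nat \<Rightarrow> (nat \<Rightarrow> nat \<Rightarrow> int) \<Rightarrow> nat list \<Rightarrow> weyl" where
  "word_elem r A ws = foldr (\<lambda>i f. refl r A (simple i) \<circ> f) ws id"

definition weyl_group :: "nat \<Rightarrow> (nat \<Rightarrow> nat \<Rightarrow> int) \<Rightarrow> weyl set" where
  "weyl_group r A = {word_elem r A ws | ws. set ws \<subseteq> {..<r}}"

definition wlen :: "nat \<Rightarrow> (nat \<Rightarrow> nat \<Rightarrow> int) \<Rightarrow> weyl \<Rightarrow> nat" where
  "wlen r A w = (LEAST k. \<exists>ws. length ws = k \<and> set ws \<subseteq> {..<r} \<and> word_elem r A ws = w)"

definition roots :: "nat \<Rightarrow> (nat \<Rightarrow> nat \<Rightarrow> int) \<Rightarrow> vec set" where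
  "roots r A = {w (simple i) | w i. w \<in> weyl_group r A \<and> i < r}"

definition pos_roots :: "nat \<Rightarrow> (nat \<Rightarrow> nat \<Rightarrow> int) \<Rightarrow> vec set" where
  "pos_roots r A = {\<beta> \<in> roots r A. \<forall>j. \<beta> j \<ge> 0}"

definition neg_roots :: "nat \<Rightarrow> (nat \<Rightarrow> nat \<Rightarrow> int) \<Rightarrow> vec set" where
  "neg_roots r A = (\<lambda>\<beta>. - \<beta>) ` pos_roots r A"

definition inv_set :: "nat \<Rightarrow> (nat \<Rightarrow> nat \<Rightarrow> int) \<Rightarrow> weyl \<Rightarrow> vec set" where
  "inv_set r A w = pos_roots r A \<inter> w ` neg_roots r A"

text \<open>Chow ring of G/B: elements are coefficient functions c on W w.r.t. the
  basis Z_w (Z_w of codimension l(w), Z_id = 1).  Multiplication by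
  D_i = Z_(sigma_i) is given by the Chevalley formula
  D_i Z_v = sum over beta in Phi+ with l(sigma_beta v) = l(v)+1 of
  (coefficient of alpha_i in beta) Z_(sigma_beta v).\<close>

definition Dmul :: "nat \<Rightarrow> (nat \<Rightarrow> nat \<Rightarrow> int) \<Rightarrow> nat \<Rightarrow> (weyl \<Rightarrow> int) \<Rightarrow> (weyl \<Rightarrow> int)" where
  "Dmul r A i c = (\<lambda>u. if u \<in> weyl_group r A then
      (\<Sum>\<beta> \<in> {\<beta> \<in> pos_roots r A. wlen r A (refl r A \<beta> \<circ> u) + 1 = wlen r A u}.
          \<beta> i * c (refl r A \<beta> \<circ> u))
    else 0)"

definition chow_one :: "weyl \<Rightarrow> int" where
  "chow_one = (\<lambda>u. if u = id then 1 else 0)"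

text \<open>C_(w,n_1..n_r): coefficient of Z_w in D_1^n_1 ... D_r^n_r.\<close>
definition Ccoef :: "nat \<Rightarrow> (nat \<Rightarrow> nat \<Rightarrow> int) \<Rightarrow> weyl \<Rightarrow> (nat \<Rightarrow> nat) \<Rightarrow> int" where
  "Ccoef r A w n = foldr (\<lambda>j c. (Dmul r A j ^^ n j) c) [0..<r] chow_one w"

definition supp :: "vec \<Rightarrow> nat set" where
  "supp v = {j. v j \<noteq> 0}"

definition R_set :: "nat set \<Rightarrow> vec set \<Rightarrow> vec set" where
  "R_set I S = {\<alpha> \<in> S. supp \<alpha> \<inter> I \<noteq> {}}"

definition is_cluster :: "nat \<Rightarrow> (nat \<Rightarrow> nat \<Rightarrow> int) \<Rightarrow> nat set \<Rightarrow> vec set \<Rightarrow> bool" where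
  "is_cluster r A I S \<longleftrightarrow>
     (\<forall>\<alpha>\<in>S. \<forall>j\<in>I. \<alpha> j \<le> 1) \<and>
     (\<forall>\<alpha>\<in>S. \<forall>\<beta>\<in>S. \<alpha> \<noteq> \<beta> \<longrightarrow> form r A \<alpha> \<beta> \<noteq> -1) \<and>
     (\<forall>\<alpha>\<in>S. \<forall>\<beta>\<in>S. form r A \<alpha> \<beta> = 0 \<longrightarrow> supp \<alpha> \<inter> supp \<beta> \<inter> I = {})"

definition A_config :: "nat \<Rightarrow> (nat \<Rightarrow> nat \<Rightarrow> int) \<Rightarrow> vec set \<Rightarrow> (nat \<Rightarrow> nat) \<Rightarrow> bool" where
  "A_config r A S n \<longleftrightarrow> S \<subseteq> pos_roots r A \<and> (\<Sum>j<r. n j) = card S"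

definition supp_tuple :: "nat \<Rightarrow> (nat \<Rightarrow> nat) \<Rightarrow> nat set" where
  "supp_tuple r n = {j. j < r \<and> n j > 0}"

definition excessive :: "nat \<Rightarrow> vec set \<Rightarrow> (nat \<Rightarrow> nat) \<Rightarrow> bool" where
  "excessive r S n \<longleftrightarrow>
     card (R_set (supp_tuple r n) S) = (\<Sum>j<r. n j) \<and>
     (\<forall>J. J \<noteq> {} \<and> J \<subset> supp_tuple r n \<longrightarrow> card (R_set J S) > (\<Sum>j\<in>J. n j))"

definition excessive_cluster :: "nat \<Rightarrow> (nat \<Rightarrow> nat \<Rightarrow> int) \<Rightarrow> vec set \<Rightarrow> (nat \<Rightarrow> nat) \<Rightarrow> bool" where
  "excessive_cluster r A S n \<longleftrightarrow> excessive r S n \<and> is_cluster r A (supp_tuple r n) S"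

inductive exc_clusterizable :: "nat \<Rightarrow> (nat \<Rightarrow> nat \<Rightarrow> int) \<Rightarrow> vec set \<Rightarrow> (nat \<Rightarrow> nat) \<Rightarrow> bool"
  for r A where
  empty: "(\<forall>j<r. n j = 0) \<Longrightarrow> exc_clusterizable r A {} n"
| step: "S \<noteq> {} \<Longrightarrow> I \<noteq> {} \<Longrightarrow> I \<subseteq> supp_tuple r n \<Longrightarrow>
         k = (\<lambda>j. if j \<in> I then n j else 0) \<Longrightarrow>
         card (R_set I S) = (\<Sum>j<r. k j) \<Longrightarrow>
         excessive_cluster r A (R_set I S) k \<Longrightarrow>
         exc_clusterizable r A (S - R_set I S) (\<lambda>j. n j - k j) \<Longrightarrow>
         exc_clusterizable r A S n"

text \<open>Path-originating sequence 0 = beta_0, beta_1, ..., beta_k (as a list of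
  length k+1).\<close>
definition path_originating :: "nat \<Rightarrow> (nat \<Rightarrow> nat \<Rightarrow> int) \<Rightarrow> vec list \<Rightarrow> bool" where
  "path_originating r A bs \<longleftrightarrow>
     bs \<noteq> [] \<and> bs ! 0 = (\<lambda>_. 0) \<and>
     (\<forall>j\<in>{1..<length bs}. bs ! j \<in> pos_roots r A) \<and>
     (\<exists>is. length is + 1 = length bs \<and>
        (\<forall>t<length is. is ! t < r \<and> bs ! (t + 1) = (\<lambda>m. (bs ! t) m + simple (is ! t) m)) \<and>
        (\<forall>t. t + 1 < length is \<longrightarrow> form r A (simple (is ! t)) (simple (is ! (t + 1))) = -1) \<and>
        (\<forall>t t'. t < length is \<and> t' < length is \<and> (t' > t + 1 \<or> t > t' + 1) \<longrightarrow>
            form r A (simple (is ! t)) (simple (is ! t')) = 0))"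

text \<open>sigma_(beta_n) o ... o sigma_(beta_1) for bs = [beta_0, ..., beta_n].\<close>
definition refl_prod :: "nat \<Rightarrow> (nat \<Rightarrow> nat \<Rightarrow> int) \<Rightarrow> vec list \<Rightarrow> weyl" where
  "refl_prod r A bs = fold (\<lambda>\<beta> f. refl r A \<beta> \<circ> f) (tl bs) id"

end

theory Submission
  imports Defs
begin

text \<open>
  By the Chevalley formula, \<open>C\<^sub>w\<^sub>,\<^sub>e\<close> is a sum over chains from \<open>w\<close> down to \<open>id\<close> in
  which each step composes with a reflection \<open>\<sigma>\<^sub>\<beta>\<close> and lowers the length by one, each
  chain weighted by the product of the \<open>\<alpha>\<^sub>i\<close>-coefficients of its roots \<open>\<beta>\<close>. All weights
  are nonnegative, and the sum is positive exactly when every inversion of \<open>w\<close> involves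
  \<open>\<alpha>\<^sub>i\<close>, i.e. when \<open>\<sigma>\<^sub>i\<close> is the only possible left descent. Each right descent \<open>\<sigma>\<^sub>t\<close> of
  \<open>w\<close> then contributes a positive term, so \<open>C\<^sub>w\<^sub>,\<^sub>e = 1\<close> forces a unique right descent at
  every stage of a reduced word; likewise, in an excessive cluster for \<open>e\<close> two right descents
  would give two inversions with scalar product \<open>0\<close> or \<open>-1\<close>. A unique right descent lets a
  path word starting at \<open>i\<close> grow by one letter: commutation and braid relations force the new
  letter to be adjacent to the last one only, and positive definiteness of the form excludes
  cycles in the Dynkin diagram. Conversely, along a path \<open>i = i\<^sub>1, \<dots>, i\<^sub>n\<close> the inversions
  of \<open>\<sigma>\<^sub>i\<^sub>1 \<cdots> \<sigma>\<^sub>i\<^sub>n\<close> are the partial sums \<open>\<beta>\<^sub>k = \<alpha>\<^sub>i\<^sub>1 + \<dots> + \<alpha>\<^sub>i\<^sub>k\<close>, which have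
  \<open>\<alpha>\<^sub>i\<close>-coefficient \<open>1\<close> and pairwise scalar product \<open>1\<close>; so they form an excessive
  cluster, and in the Chevalley recursion only the chain through the prefixes of the path
  survives. The partial sums are recovered from the inversion set by their heights, which
  gives uniqueness.
\<close>

section \<open>Roots of a simply laced Cartan matrix\<close>

definition in_lattice :: "nat \<Rightarrow> vec \<Rightarrow> bool" where
  "in_lattice r v \<longleftrightarrow> (\<forall>j\<ge>r. v j = 0)"

definition zlinear :: "weyl \<Rightarrow> bool" where
  "zlinear f \<longleftrightarrow> (\<forall>u v. f (\<lambda>j. u j + v j) = (\<lambda>j. f u j + f v j)) \<and>
                  (\<forall>c u. f (\<lambda>j. c * u j) = (\<lambda>j. c * f u j))"

definition preserves_form :: "nat \<Rightarrow> (nat \<Rightarrow> nat \<Rightarrow> int) \<Rightarrow> weyl \<Rightarrow> bool" where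
  "preserves_form r A f \<longleftrightarrow> (\<forall>u v. form r A (f u) (f v) = form r A u v)"

lemma zlinear_add: "zlinear f \<Longrightarrow> f (\<lambda>j. u j + v j) = (\<lambda>j. f u j + f v j)"
  unfolding zlinear_def by blast

lemma zlinear_smult: "zlinear f \<Longrightarrow> f (\<lambda>j. c * u j) = (\<lambda>j. c * f u j)"
  unfolding zlinear_def by blast

lemma zlinear_zero: "zlinear f \<Longrightarrow> f (\<lambda>_. 0) = (\<lambda>_. 0)"
  using zlinear_smult[of f 0 "\<lambda>_. 0"] by simp

lemma vec_uminus_uminus [simp]: "- (- (v::vec)) = v"
  by (simp add: fun_Compl_def)

lemma zlinear_uminus: "zlinear f \<Longrightarrow> f (- u) = - f u"
  using zlinear_smult[of f "-1" u] by (simp add: fun_Compl_def)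

lemma zlinear_diff: "zlinear f \<Longrightarrow> f (\<lambda>j. u j - v j) = (\<lambda>j. f u j - f v j)"
  using zlinear_add[of f u "- v"] zlinear_uminus[of f v] by simp

lemma zlinear_sum:
  assumes "zlinear f" and "finite F"
  shows "f (\<lambda>k. \<Sum>j\<in>F. c j * v j k) = (\<lambda>k. \<Sum>j\<in>F. c j * f (v j) k)"
  using assms(2)
proof (induction F rule: finite_induct)
  case empty
  then show ?case using zlinear_zero[OF assms(1)] by simp
next
  case (insert x F)
  have "f (\<lambda>k. \<Sum>j\<in>insert x F. c j * v j k) = f (\<lambda>k. c x * v x k + (\<Sum>j\<in>F. c j * v j k))"
    using insert by simp
  also have "\<dots> = (\<lambda>k. c x * f (v x) k + (\<Sum>j\<in>F. c j * f (v j) k))"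
    using insert zlinear_add[OF assms(1)] zlinear_smult[OF assms(1)] by simp
  finally show ?case using insert by simp
qed

lemma sum_square_sym_split:
  fixes t :: "nat \<Rightarrow> nat \<Rightarrow> int"
  assumes "\<And>j k. j < m \<Longrightarrow> k < m \<Longrightarrow> t j k = t k j"
  shows "(\<Sum>j<m. \<Sum>k<m. t j k) = (\<Sum>j<m. t j j) + 2 * (\<Sum>j<m. \<Sum>k<j. t j k)"
  using assms
proof (induction m)
  case 0
  then show ?case by simp
next
  case (Suc m)
  have "(\<Sum>j<m. t j m) = (\<Sum>k<m. t m k)"
    using Suc.prems by (intro sum.cong) auto
  moreover have "(\<Sum>j<Suc m. \<Sum>k<Suc m. t j k)
      = (\<Sum>j<m. \<Sum>k<m. t j k) + (\<Sum>j<m. t j m) + (\<Sum>k<m. t m k) + t m m"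
    by (simp add: sum.distrib)
  ultimately show ?case using Suc by simp
qed

locale simply_laced =
  fixes r :: nat and A :: "nat \<Rightarrow> nat \<Rightarrow> int"
  assumes cartan: "simply_laced_cartan r A"
begin

abbreviation "B \<equiv> form r A"
abbreviation "sr j \<equiv> refl r A (simple j)"
abbreviation "W \<equiv> weyl_group r A"
abbreviation "len \<equiv> wlen r A"
abbreviation "rts \<equiv> roots r A"
abbreviation "pos \<equiv> pos_roots r A"
abbreviation "neg \<equiv> neg_roots r A"
abbreviation "N \<equiv> inv_set r A"
abbreviation "wd \<equiv> word_elem r A"
abbreviation "Q \<equiv> in_lattice r"

lemma A_diag: "i < r \<Longrightarrow> A i i = 2"
  using cartan unfolding simply_laced_cartan_def by blast

lemma A_sym: "i < r \<Longrightarrow> j < r \<Longrightarrow> A i j = A j i"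
  using cartan unfolding simply_laced_cartan_def by blast

lemma A_off_diag: "i < r \<Longrightarrow> j < r \<Longrightarrow> i \<noteq> j \<Longrightarrow> A i j = 0 \<or> A i j = -1"
  using cartan unfolding simply_laced_cartan_def by blast

lemma A_off_diag_nonpos: "i < r \<Longrightarrow> j < r \<Longrightarrow> i \<noteq> j \<Longrightarrow> A i j \<le> 0"
  using A_off_diag by fastforce

lemma B_pos_def: "Q v \<Longrightarrow> v \<noteq> (\<lambda>_. 0) \<Longrightarrow> B v v > 0"
  using cartan unfolding simply_laced_cartan_def in_lattice_def by blast

lemma B_sym: "B u v = B v u"
  unfolding form_def by (subst sum.swap) (auto intro!: sum.cong simp: A_sym ac_simps)

lemma B_add_left: "B (\<lambda>j. u j + v j) w = B u w + B v w"
  unfolding form_def by (simp add: algebra_simps sum.distrib)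

lemma B_smult_left: "B (\<lambda>j. c * u j) w = c * B u w"
  unfolding form_def by (simp add: algebra_simps sum_distrib_left)

lemma B_diff_left: "B (\<lambda>j. u j - v j) w = B u w - B v w"
  unfolding form_def by (simp add: algebra_simps sum_subtractf)

lemma B_uminus_left: "B (- u) w = - B u w"
  unfolding form_def by (simp add: sum_negf)

lemma B_zero_left: "B (\<lambda>_. 0) w = 0"
  unfolding form_def by simp

lemma B_add_right: "B w (\<lambda>j. u j + v j) = B w u + B w v"
  using B_add_left B_sym by metis

lemma B_smult_right: "B w (\<lambda>j. c * u j) = c * B w u"
  using B_smult_left B_sym by metis

lemma B_diff_right: "B w (\<lambda>j. u j - v j) = B w u - B w v"
  using B_diff_left B_sym by metis

lemma B_uminus_right: "B w (- u) = - B w u"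
  using B_uminus_left B_sym by metis

lemma sum_simple_mult: "a < r \<Longrightarrow> (\<Sum>j<r. simple a j * X j) = (X a :: int)"
proof -
  have "(\<Sum>j<r. simple a j * X j) = (\<Sum>j<r. if j = a then X j else 0)"
    by (rule sum.cong) (auto simp: simple_def)
  then show "a < r \<Longrightarrow> ?thesis" by simp
qed

lemma B_simple_left: "a < r \<Longrightarrow> B (simple a) v = (\<Sum>k<r. A a k * v k)"
  unfolding form_def
  by (simp add: sum_distrib_left[symmetric] mult.assoc sum_simple_mult
           flip: sum_distrib_left)

lemma B_simple: "a < r \<Longrightarrow> b < r \<Longrightarrow> B (simple a) (simple b) = A a b"
  using sum_simple_mult[of b "A a"] by (simp add: B_simple_left mult.commute)

lemma B_simple_self: "a < r \<Longrightarrow> B (simple a) (simple a) = 2"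
  using B_simple A_diag by simp

lemma B_even: "even (B v v)"
proof -
  have "B v v = (\<Sum>j<r. v j * A j j * v j) + 2 * (\<Sum>j<r. \<Sum>k<j. v j * A j k * v k)"
    unfolding form_def by (rule sum_square_sym_split) (simp add: A_sym ac_simps)
  moreover have "(\<Sum>j<r. v j * A j j * v j) = (\<Sum>j<r. 2 * (v j * v j))"
    by (intro sum.cong) (auto simp: A_diag)
  ultimately show ?thesis by (simp add: sum_distrib_left[symmetric])
qed

lemma B_ge_2: "Q v \<Longrightarrow> v \<noteq> (\<lambda>_. 0) \<Longrightarrow> B v v \<ge> 2"
  using B_pos_def[of v] B_even[of v] by (auto elim!: evenE)

lemma refl_zlinear: "zlinear (refl r A \<beta>)"
  unfolding zlinear_def refl_def by (auto simp: B_add_left B_smult_left algebra_simps fun_eq_iff)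

lemma refl_preserves_form:
  assumes "B \<beta> \<beta> = 2"
  shows "preserves_form r A (refl r A \<beta>)"
  unfolding preserves_form_def
proof (intro allI)
  fix u v
  define a b where "a = B u \<beta>" and "b = B v \<beta>"
  have "B (refl r A \<beta> u) (refl r A \<beta> v) = B (\<lambda>j. u j - a * \<beta> j) (\<lambda>j. v j - b * \<beta> j)"
    by (simp add: refl_def a_def b_def)
  also have "\<dots> = (B u v - b * B u \<beta>) - a * (B \<beta> v - b * B \<beta> \<beta>)"
    by (simp only: B_diff_left B_smult_left B_diff_right B_smult_right)
  also have "\<dots> = B u v" using assms B_sym[of \<beta> v] unfolding a_def b_def by (simp add: algebra_simps)
  finally show "B (refl r A \<beta> u) (refl r A \<beta> v) = B u v" .
qed

lemma refl_refl: "B \<beta> \<beta> = 2 \<Longrightarrow> refl r A \<beta> (refl r A \<beta> v) = v"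
  unfolding refl_def by (simp add: B_diff_left B_smult_left)

lemma refl_comp_refl: "B \<beta> \<beta> = 2 \<Longrightarrow> refl r A \<beta> \<circ> refl r A \<beta> = id"
  using refl_refl by (simp add: fun_eq_iff)

lemma refl_in_lattice: "Q \<beta> \<Longrightarrow> Q v \<Longrightarrow> Q (refl r A \<beta> v)"
  unfolding refl_def in_lattice_def by simp

lemma refl_uminus: "refl r A (- \<beta>) = refl r A \<beta>"
  unfolding refl_def by (simp add: fun_eq_iff B_uminus_right)

lemma refl_self: "B \<beta> \<beta> = 2 \<Longrightarrow> refl r A \<beta> \<beta> = - \<beta>"
  unfolding refl_def by (simp add: fun_eq_iff)

lemma refl_conj:
  assumes "zlinear f" and "preserves_form r A f"
  shows "refl r A (f \<beta>) (f v) = f (refl r A \<beta> v)"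
proof -
  have "f (refl r A \<beta> v) = (\<lambda>j. f v j - B v \<beta> * f \<beta> j)"
    unfolding refl_def using zlinear_diff[OF assms(1)] zlinear_smult[OF assms(1)] by metis
  then show ?thesis using assms(2) unfolding preserves_form_def refl_def by simp
qed

lemma sr_simple: "j < r \<Longrightarrow> sr j (simple j) = - simple j"
  using refl_self B_simple_self by blast

lemma sr_sr: "j < r \<Longrightarrow> sr j (sr j v) = v"
  using refl_refl B_simple_self by blast

lemma sr_comp_sr: "j < r \<Longrightarrow> sr j \<circ> sr j = id"
  using refl_comp_refl B_simple_self by blast

lemma sr_uminus: "sr j (- v) = - sr j v"
  using zlinear_uminus refl_zlinear by blast

lemma simple_in_lattice: "j < r \<Longrightarrow> Q (simple j)"
  unfolding in_lattice_def simple_def by simp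

lemma simple_inj: "simple a = simple b \<Longrightarrow> a = b"
  by (metis simple_def zero_neq_one)

lemma wd_Nil: "wd [] = id"
  by (simp add: word_elem_def)

lemma wd_Cons: "wd (j # ws) = sr j \<circ> wd ws"
  by (simp add: word_elem_def)

lemma wd_append: "wd (xs @ ys) = wd xs \<circ> wd ys"
  by (induction xs) (auto simp: wd_Nil wd_Cons)

lemma wd_snoc: "wd (ws @ [j]) = wd ws \<circ> sr j"
  by (simp add: wd_append wd_Cons wd_Nil)

lemma W_iff: "u \<in> W \<longleftrightarrow> (\<exists>ws. set ws \<subseteq> {..<r} \<and> wd ws = u)"
  unfolding weyl_group_def by blast

lemma wd_in_W: "set ws \<subseteq> {..<r} \<Longrightarrow> wd ws \<in> W"
  using W_iff by blast

lemma wd_structure: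
  "set ws \<subseteq> {..<r} \<Longrightarrow> zlinear (wd ws) \<and> preserves_form r A (wd ws) \<and> (\<forall>x. Q x \<longrightarrow> Q (wd ws x))"
proof (induction ws)
  case Nil
  then show ?case by (simp add: wd_Nil zlinear_def preserves_form_def)
next
  case (Cons j ws)
  have "preserves_form r A (sr j)"
    using refl_preserves_form B_simple_self Cons.prems by simp
  then show ?case
    using Cons refl_zlinear[of "simple j"] refl_in_lattice simple_in_lattice
    unfolding wd_Cons zlinear_def preserves_form_def by simp
qed

lemma W_structure: "u \<in> W \<Longrightarrow> zlinear u \<and> preserves_form r A u \<and> (\<forall>x. Q x \<longrightarrow> Q (u x))"
  unfolding W_iff using wd_structure by blast

lemma W_zlinear: "u \<in> W \<Longrightarrow> zlinear u"
  using W_structure by blast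

lemma W_preserves_form: "u \<in> W \<Longrightarrow> preserves_form r A u"
  using W_structure by blast

lemma W_B: "u \<in> W \<Longrightarrow> B (u x) (u y) = B x y"
  using W_preserves_form preserves_form_def by blast

lemma W_in_lattice: "u \<in> W \<Longrightarrow> Q x \<Longrightarrow> Q (u x)"
  using W_structure by blast

lemma W_uminus: "u \<in> W \<Longrightarrow> u (- v) = - u v"
  using W_zlinear zlinear_uminus by blast

lemma id_in_W: "id \<in> W"
  using wd_in_W[of "[]"] wd_Nil by simp

lemma sr_in_W: "j < r \<Longrightarrow> sr j \<in> W"
  using wd_in_W[of "[j]"] wd_snoc[of "[]"] wd_Nil by simp

lemma W_comp: "u \<in> W \<Longrightarrow> v \<in> W \<Longrightarrow> u \<circ> v \<in> W"
  unfolding W_iff by (metis wd_append set_append Un_least)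

lemma wd_rev_comp: "set ws \<subseteq> {..<r} \<Longrightarrow> wd (rev ws) \<circ> wd ws = id"
proof (induction ws)
  case Nil
  then show ?case by (simp add: wd_Nil)
next
  case (Cons j ws)
  then have "wd (rev (j # ws)) \<circ> wd (j # ws) = wd (rev ws) \<circ> (sr j \<circ> sr j) \<circ> wd ws"
    by (simp add: wd_append wd_Cons wd_Nil comp_assoc)
  then show ?case using Cons sr_comp_sr by simp
qed

lemma W_inverse: "u \<in> W \<Longrightarrow> \<exists>v\<in>W. u \<circ> v = id \<and> v \<circ> u = id"
  unfolding W_iff by (metis wd_rev_comp set_rev rev_rev_ident wd_in_W)

lemma W_inj: "u \<in> W \<Longrightarrow> u x = u y \<Longrightarrow> x = y"
  using W_inverse by (metis comp_apply id_apply)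

lemma W_refl_conj: "u \<in> W \<Longrightarrow> refl r A (u \<beta>) \<circ> u = u \<circ> refl r A \<beta>"
  using refl_conj W_zlinear W_preserves_form by (simp add: fun_eq_iff)

lemma root_iff: "\<beta> \<in> rts \<longleftrightarrow> (\<exists>u\<in>W. \<exists>i<r. \<beta> = u (simple i))"
  unfolding roots_def by blast

lemma simple_root: "i < r \<Longrightarrow> simple i \<in> rts"
  using root_iff id_in_W by (metis id_apply)

lemma root_B_self: "\<beta> \<in> rts \<Longrightarrow> B \<beta> \<beta> = 2"
  using root_iff W_B B_simple_self by metis

lemma root_in_lattice: "\<beta> \<in> rts \<Longrightarrow> Q \<beta>"
  using root_iff W_in_lattice simple_in_lattice by metis

lemma root_nonzero: "\<beta> \<in> rts \<Longrightarrow> \<beta> \<noteq> (\<lambda>_. 0)"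
  using root_B_self B_zero_left by force

lemma W_root: "u \<in> W \<Longrightarrow> \<beta> \<in> rts \<Longrightarrow> u \<beta> \<in> rts"
  unfolding root_iff using W_comp by (metis comp_apply)

lemma root_uminus: "\<beta> \<in> rts \<Longrightarrow> - \<beta> \<in> rts"
proof -
  assume "\<beta> \<in> rts"
  then obtain u i where u: "u \<in> W" "i < r" "\<beta> = u (simple i)" using root_iff by blast
  have "(u \<circ> sr i) (simple i) = - \<beta>" using u sr_simple W_uminus by (simp add: fun_Compl_def)
  then show ?thesis using root_iff u W_comp sr_in_W by metis
qed

lemma refl_root_in_W: "\<beta> \<in> rts \<Longrightarrow> refl r A \<beta> \<in> W"
proof -
  assume "\<beta> \<in> rts"
  then obtain u i where u: "u \<in> W" "i < r" "\<beta> = u (simple i)" using root_iff by blast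
  obtain v where v: "v \<in> W" "u \<circ> v = id" using W_inverse u by blast
  have "refl r A \<beta> = refl r A \<beta> \<circ> u \<circ> v" using v by (simp add: comp_assoc)
  also have "\<dots> = u \<circ> sr i \<circ> v" using W_refl_conj u by simp
  finally show ?thesis using W_comp sr_in_W u v by simp
qed

lemma B_pos_neg_parts_nonpos: "B (\<lambda>j. max (v j) 0) (\<lambda>j. max (- v j) 0) \<le> 0"
  unfolding form_def
proof (intro sum_nonpos)
  fix j k assume "j \<in> {..<r}" "k \<in> {..<r}"
  then show "max (v j) 0 * A j k * max (- v k) 0 \<le> 0"
  proof (cases "j = k")
    case True
    then show ?thesis by (simp add: max_def)
  next
    case False
    then have "A j k \<le> 0" using A_off_diag_nonpos \<open>j \<in> {..<r}\<close> \<open>k \<in> {..<r}\<close> by auto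
    then show ?thesis by (simp add: mult_nonneg_nonpos mult_nonpos_nonneg)
  qed
qed

text \<open>A vector of square length 2 splits as \<open>p - q\<close> with disjointly supported nonnegative
  \<open>p, q\<close> and \<open>B p q \<le> 0\<close>; if both were nonzero, \<open>B v v \<ge> 2 + 2\<close>.\<close>
lemma sign_dichotomy:
  assumes "Q v" and "B v v = 2"
  shows "(\<forall>j. v j \<ge> 0) \<or> (\<forall>j. v j \<le> 0)"
proof (rule ccontr)
  assume mixed: "\<not> ?thesis"
  define p where "p = (\<lambda>j. max (v j) 0)"
  define q where "q = (\<lambda>j. max (- v j) 0)"
  have "p \<noteq> (\<lambda>_. 0)" "q \<noteq> (\<lambda>_. 0)"
    using mixed unfolding p_def q_def by (auto simp: fun_eq_iff max_def split: if_splits)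
  moreover have "Q p" "Q q" using assms(1) unfolding p_def q_def in_lattice_def by auto
  ultimately have "B p p \<ge> 2" "B q q \<ge> 2" using B_ge_2 by auto
  moreover have "v = (\<lambda>j. p j - q j)" unfolding p_def q_def by (auto simp: fun_eq_iff)
  then have "B v v = B p p - 2 * B p q + B q q"
    by (simp add: B_diff_left B_diff_right B_sym[of q p])
  ultimately show False using B_pos_neg_parts_nonpos[of v] assms(2) unfolding p_def q_def by linarith
qed

lemma neg_iff: "\<beta> \<in> neg \<longleftrightarrow> - \<beta> \<in> pos"
  unfolding neg_roots_def by (metis image_iff vec_uminus_uminus)

lemma root_uminus_iff: "- \<beta> \<in> rts \<longleftrightarrow> \<beta> \<in> rts"
  using root_uminus[of \<beta>] root_uminus[of "- \<beta>"] by auto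

lemma pos_iff: "\<beta> \<in> pos \<longleftrightarrow> \<beta> \<in> rts \<and> (\<forall>j. \<beta> j \<ge> 0)"
  unfolding pos_roots_def by blast

lemma neg_iff_nonpos: "\<beta> \<in> neg \<longleftrightarrow> \<beta> \<in> rts \<and> (\<forall>j. \<beta> j \<le> 0)"
  unfolding neg_iff pos_iff root_uminus_iff by auto

lemma root_pos_or_neg: "\<beta> \<in> rts \<Longrightarrow> \<beta> \<in> pos \<or> \<beta> \<in> neg"
  using sign_dichotomy root_in_lattice root_B_self pos_iff neg_iff_nonpos by blast

lemma pos_not_neg: "\<beta> \<in> pos \<Longrightarrow> \<beta> \<notin> neg"
proof
  assume "\<beta> \<in> pos" "\<beta> \<in> neg"
  then have "\<beta> = (\<lambda>_. 0)" "\<beta> \<in> rts"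
    using pos_iff neg_iff_nonpos by (auto simp: fun_eq_iff intro: antisym)
  then show False using root_nonzero by blast
qed

lemma pos_root: "\<beta> \<in> pos \<Longrightarrow> \<beta> \<in> rts"
  using pos_iff by blast

lemma simple_pos: "i < r \<Longrightarrow> simple i \<in> pos"
  using pos_iff simple_root by (simp add: simple_def)

lemma simple_neg: "i < r \<Longrightarrow> - simple i \<in> neg"
  using neg_iff simple_pos by simp

lemma W_simple_pos_or_neg: "u \<in> W \<Longrightarrow> j < r \<Longrightarrow> u (simple j) \<in> pos \<or> u (simple j) \<in> neg"
  using root_pos_or_neg W_root simple_root by blast

lemma pos_root_supported_at_simple:
  assumes "j < r" and "\<beta> \<in> pos" and "\<forall>k. k \<noteq> j \<longrightarrow> \<beta> k = 0"
  shows "\<beta> = simple j"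
proof -
  have \<beta>: "\<beta> = (\<lambda>k. \<beta> j * simple j k)" using assms(3) by (auto simp: fun_eq_iff simple_def)
  have "2 = B (\<lambda>k. \<beta> j * simple j k) (\<lambda>k. \<beta> j * simple j k)"
    using root_B_self[OF pos_root[OF assms(2)]] \<beta> by simp
  also have "\<dots> = \<beta> j * \<beta> j * 2"
    by (simp only: B_smult_left B_smult_right B_simple_self[OF assms(1)] ac_simps)
  finally have "\<beta> j * \<beta> j = 1" by simp
  moreover have "\<beta> j \<ge> 0" using assms(2) pos_iff by blast
  ultimately have "\<beta> j = 1" by (auto simp: zmult_eq_1_iff)
  then show ?thesis using \<beta> by simp
qed

text \<open>A positive root other than \<open>\<alpha>\<^sub>j\<close> has a positive coordinate off \<open>j\<close>, which \<open>\<sigma>\<^sub>j\<close> leaves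
  unchanged.\<close>
lemma sr_pos:
  assumes j: "j < r" and \<beta>: "\<beta> \<in> pos" and ne: "\<beta> \<noteq> simple j"
  shows "sr j \<beta> \<in> pos"
proof -
  obtain k where k: "k \<noteq> j" "\<beta> k \<noteq> 0"
    using pos_root_supported_at_simple[OF j \<beta>] ne by blast
  then have "sr j \<beta> k > 0" using \<beta> pos_iff by (simp add: refl_def simple_def order_less_le)
  then have "sr j \<beta> \<notin> neg" using neg_iff_nonpos by (meson leD)
  then show ?thesis
    using root_pos_or_neg W_root sr_in_W j pos_root \<beta> by blast
qed

section \<open>Length and inversion sets\<close>

lemma len_le_length: "set ws \<subseteq> {..<r} \<Longrightarrow> len (wd ws) \<le> length ws"
  unfolding wlen_def by (rule Least_le) blast

lemma reduced_word_exists: "u \<in> W \<Longrightarrow> \<exists>ws. length ws = len u \<and> set ws \<subseteq> {..<r} \<and> wd ws = u"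
  unfolding wlen_def W_iff by (rule LeastI_ex) blast

lemma len_id: "len id = 0"
  using len_le_length[of "[]"] wd_Nil by simp

lemma len_eq_0_imp_id: "u \<in> W \<Longrightarrow> len u = 0 \<Longrightarrow> u = id"
  using reduced_word_exists wd_Nil by fastforce

lemma len_comp_le: "u \<in> W \<Longrightarrow> v \<in> W \<Longrightarrow> len (u \<circ> v) \<le> len u + len v"
  using reduced_word_exists[of u] reduced_word_exists[of v] len_le_length
  by (metis wd_append length_append set_append Un_least)

lemma len_sr_le: "j < r \<Longrightarrow> len (sr j) \<le> 1"
  using len_le_length[of "[j]"] wd_snoc[of "[]"] wd_Nil by simp

lemma N_id: "N id = {}"
  unfolding inv_set_def using pos_not_neg by auto

lemma N_subset_pos: "N u \<subseteq> pos"
  unfolding inv_set_def by blast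

lemma sr_neg:
  assumes j: "j < r" and \<gamma>: "\<gamma> \<in> neg" and ne: "\<gamma> \<noteq> - simple j"
  shows "sr j \<gamma> \<in> neg" and "sr j \<gamma> \<noteq> - simple j"
proof -
  have "- \<gamma> \<noteq> simple j" using ne by (metis vec_uminus_uminus)
  then have "sr j (- \<gamma>) \<in> pos" using sr_pos j \<gamma> neg_iff by blast
  then show "sr j \<gamma> \<in> neg" using sr_uminus neg_iff by simp
  show "sr j \<gamma> \<noteq> - simple j"
  proof
    assume "sr j \<gamma> = - simple j"
    then have "\<gamma> = simple j" using sr_sr[OF j] sr_uminus sr_simple[OF j] by (metis vec_uminus_uminus)
    then show False using \<gamma> simple_pos[OF j] pos_not_neg by blast
  qed
qed

lemma sr_image_neg: "j < r \<Longrightarrow> sr j ` neg = (neg - {- simple j}) \<union> {simple j}"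
proof (intro equalityI subsetI)
  fix x assume j: "j < r" and "x \<in> sr j ` neg"
  then obtain \<gamma> where "\<gamma> \<in> neg" "x = sr j \<gamma>" by blast
  then show "x \<in> (neg - {- simple j}) \<union> {simple j}"
    using sr_neg[OF j] sr_uminus sr_simple[OF j] by (cases "\<gamma> = - simple j") auto
next
  fix x assume j: "j < r" and x: "x \<in> (neg - {- simple j}) \<union> {simple j}"
  show "x \<in> sr j ` neg"
  proof (cases "x = simple j")
    case True
    have "sr j (- simple j) = simple j" using sr_uminus sr_simple[OF j] by simp
    then show ?thesis using True simple_neg[OF j] by (metis image_eqI)
  next
    case False
    then have "sr j x \<in> neg" using x sr_neg[OF j] by blast
    then show ?thesis using sr_sr[OF j] by (metis image_eqI)
  qed
qed

lemma N_comp_sr: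
  assumes u: "u \<in> W" and j: "j < r"
  shows "N (u \<circ> sr j) = (N u - {u (- simple j)}) \<union> ({u (simple j)} \<inter> pos)"
proof -
  have "(u \<circ> sr j) ` neg = u ` (sr j ` neg)"
    by (rule image_comp[symmetric])
  also have "\<dots> = u ` ((neg - {- simple j}) \<union> {simple j})"
    using sr_image_neg[OF j] by simp
  also have "\<dots> = (u ` neg - {u (- simple j)}) \<union> {u (simple j)}"
    using W_inj[OF u] by (auto simp: inj_on_def image_set_diff)
  finally show ?thesis unfolding inv_set_def by blast
qed

lemma N_comp_sr_up:
  assumes u: "u \<in> W" and j: "j < r" and p: "u (simple j) \<in> pos"
  shows "N (u \<circ> sr j) = insert (u (simple j)) (N u)" and "u (simple j) \<notin> N u"
proof -
  have "u (- simple j) \<in> neg" using W_uminus[OF u] p neg_iff by simp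
  then have "u (- simple j) \<notin> N u" using pos_not_neg unfolding inv_set_def by blast
  then show "N (u \<circ> sr j) = insert (u (simple j)) (N u)" using N_comp_sr[OF u j] p by blast
  show "u (simple j) \<notin> N u"
    using W_inj[OF u] simple_pos[OF j] pos_not_neg unfolding inv_set_def by blast
qed

lemma N_comp_sr_down:
  assumes u: "u \<in> W" and j: "j < r" and n: "u (simple j) \<in> neg"
  shows "N (u \<circ> sr j) = N u - {- u (simple j)}" and "- u (simple j) \<in> N u"
proof -
  show "N (u \<circ> sr j) = N u - {- u (simple j)}"
    using N_comp_sr[OF u j] W_uminus[OF u] n pos_not_neg by auto
  show "- u (simple j) \<in> N u"
    unfolding inv_set_def using n neg_iff W_uminus[OF u] simple_neg[OF j] by (metis IntI image_eqI)
qed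

lemma refl_inversion_deletes_letter:
  assumes "set ws \<subseteq> {..<r}" and "\<beta> \<in> pos" and "\<beta> \<in> wd ws ` neg"
  shows "\<exists>ws'. set ws' \<subseteq> set ws \<and> length ws' + 1 = length ws \<and> refl r A \<beta> \<circ> wd ws = wd ws'"
  using assms
proof (induction ws arbitrary: \<beta>)
  case Nil
  then show ?case using wd_Nil pos_not_neg by auto
next
  case (Cons j ws)
  then have ws: "set ws \<subseteq> {..<r}" and j: "j < r" by auto
  obtain \<delta> where \<delta>: "\<delta> \<in> neg" "\<beta> = sr j (wd ws \<delta>)" using Cons.prems wd_Cons by auto
  show ?case
  proof (cases "\<beta> = simple j")
    case True
    then have "refl r A \<beta> \<circ> wd (j # ws) = wd ws"
      using sr_comp_sr[OF j] by (simp add: wd_Cons comp_assoc flip: comp_assoc)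
    then show ?thesis by (intro exI[of _ ws]) auto
  next
    case False
    then have "sr j \<beta> \<in> pos" using sr_pos[OF j Cons.prems(2)] by blast
    moreover have "sr j \<beta> \<in> wd ws ` neg" using \<delta> sr_sr[OF j] by simp
    ultimately obtain ws' where ws': "set ws' \<subseteq> set ws" "length ws' + 1 = length ws"
        "refl r A (sr j \<beta>) \<circ> wd ws = wd ws'" using Cons.IH ws by blast
    have "refl r A \<beta> \<circ> sr j = sr j \<circ> refl r A (sr j \<beta>)"
      using W_refl_conj[OF sr_in_W[OF j], of "sr j \<beta>"] sr_sr[OF j] by simp
    then have "refl r A \<beta> \<circ> wd (j # ws) = sr j \<circ> refl r A (sr j \<beta>) \<circ> wd ws"
      by (simp add: wd_Cons comp_assoc flip: comp_assoc)
    also have "\<dots> = wd (j # ws')" using ws'(3) by (simp add: wd_Cons comp_assoc)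
    finally have "refl r A \<beta> \<circ> wd (j # ws) = wd (j # ws')" .
    then show ?thesis using ws' by (intro exI[of _ "j # ws'"]) auto
  qed
qed

lemma reduced_word_snoc_pos:
  assumes ws: "set (ws @ [j]) \<subseteq> {..<r}" and red: "len (wd (ws @ [j])) = length ws + 1"
  shows "wd ws (simple j) \<in> pos"
proof (rule ccontr)
  assume "wd ws (simple j) \<notin> pos"
  then have "wd ws (simple j) \<in> neg" using W_simple_pos_or_neg[of "wd ws" j] wd_in_W[of ws] ws by auto
  then have "- wd ws (simple j) \<in> N (wd ws)" using N_comp_sr_down(2) wd_in_W[of ws] ws by auto
  then have "- wd ws (simple j) \<in> pos" "- wd ws (simple j) \<in> wd ws ` neg"
    unfolding inv_set_def by auto
  then obtain ws' where ws': "set ws' \<subseteq> set ws" "length ws' + 1 = length ws"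
      "refl r A (- wd ws (simple j)) \<circ> wd ws = wd ws'"
    using refl_inversion_deletes_letter[of ws "- wd ws (simple j)"] ws by auto
  have "wd (ws @ [j]) = wd ws'"
    using ws'(3) W_refl_conj[of "wd ws" "simple j"] wd_in_W[of ws] ws
    by (simp add: refl_uminus wd_snoc)
  then show False using len_le_length[of ws'] ws ws' red by auto
qed

lemma len_eq_card_N: "u \<in> W \<Longrightarrow> finite (N u) \<and> len u = card (N u)"
proof (induction "len u" arbitrary: u)
  case 0
  then have "u = id" using len_eq_0_imp_id by simp
  then show ?case using N_id 0 by (metis card.empty finite.emptyI)
next
  case (Suc m)
  obtain ws j where ws: "length ws = m" "set (ws @ [j]) \<subseteq> {..<r}" "wd (ws @ [j]) = u"
    using reduced_word_exists[OF Suc.prems] Suc.hyps(2)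
    by (metis length_Suc_conv_rev)
  have u': "wd ws \<in> W" "j < r" using ws wd_in_W by auto
  have "len (wd ws) \<le> m" using len_le_length[of ws] ws by simp
  moreover have "len u \<le> len (wd ws) + 1"
    using len_comp_le[OF u'(1) sr_in_W[OF u'(2)]] len_sr_le[OF u'(2)] ws(3) wd_snoc by simp
  ultimately have "len (wd ws) = m" using Suc.hyps(2) by simp
  then have "finite (N (wd ws)) \<and> card (N (wd ws)) = m" using Suc.hyps(1) u' by metis
  moreover have "wd ws (simple j) \<in> pos" using reduced_word_snoc_pos ws Suc.hyps(2) by simp
  ultimately show ?case
    using N_comp_sr_up[OF u'] ws(3) Suc.hyps(2) unfolding wd_snoc by (simp add: card_insert_if)
qed

lemma N_finite: "u \<in> W \<Longrightarrow> finite (N u)"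
  using len_eq_card_N by blast

lemma len_card_N: "u \<in> W \<Longrightarrow> len u = card (N u)"
  using len_eq_card_N by blast

lemma len_comp_sr_up: "u \<in> W \<Longrightarrow> j < r \<Longrightarrow> u (simple j) \<in> pos \<Longrightarrow> len (u \<circ> sr j) = len u + 1"
  using len_card_N N_comp_sr_up N_finite W_comp sr_in_W by simp

lemma len_comp_sr_down: "u \<in> W \<Longrightarrow> j < r \<Longrightarrow> u (simple j) \<in> neg \<Longrightarrow> len (u \<circ> sr j) + 1 = len u"
  using len_card_N N_comp_sr_down N_finite W_comp sr_in_W
  by (metis Suc_eq_plus1 card_Suc_Diff1)

lemma right_descent_iff: "u \<in> W \<Longrightarrow> j < r \<Longrightarrow> len (u \<circ> sr j) < len u \<longleftrightarrow> u (simple j) \<in> neg"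
  using len_comp_sr_up len_comp_sr_down W_simple_pos_or_neg pos_not_neg
  by (metis less_add_one not_less_iff_gr_or_eq)

lemma right_descent_exists: "u \<in> W \<Longrightarrow> len u > 0 \<Longrightarrow> \<exists>j<r. u (simple j) \<in> neg"
proof -
  assume u: "u \<in> W" and l: "len u > 0"
  obtain ws j where ws: "length ws + 1 = len u" "set (ws @ [j]) \<subseteq> {..<r}" "wd (ws @ [j]) = u"
    using reduced_word_exists[OF u] l by (metis Suc_eq_plus1 gr0_implies_Suc length_Suc_conv_rev)
  have j: "j < r" using ws by simp
  have "u \<circ> sr j = wd ws" using ws(3) sr_comp_sr[OF j] by (metis wd_snoc comp_assoc comp_id)
  then have "len (u \<circ> sr j) < len u" using len_le_length[of ws] ws by simp
  then show ?thesis using right_descent_iff u j by blast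
qed

lemma len_refl_inversion_less:
  assumes u: "u \<in> W" and \<beta>: "\<beta> \<in> N u"
  shows "len (refl r A \<beta> \<circ> u) < len u"
proof -
  obtain ws where ws: "length ws = len u" "set ws \<subseteq> {..<r}" "wd ws = u"
    using reduced_word_exists u by metis
  have "\<beta> \<in> pos" "\<beta> \<in> wd ws ` neg" using \<beta> ws unfolding inv_set_def by auto
  then obtain ws' where ws': "set ws' \<subseteq> set ws" "length ws' + 1 = length ws"
      "refl r A \<beta> \<circ> wd ws = wd ws'"
    using refl_inversion_deletes_letter ws by blast
  then have "len (refl r A \<beta> \<circ> u) \<le> length ws'" using len_le_length ws by (metis order_trans)
  then show ?thesis using ws ws' by simp
qed

lemma refl_refl_comp: "\<beta> \<in> pos \<Longrightarrow> refl r A \<beta> \<circ> (refl r A \<beta> \<circ> u) = u"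
  using refl_comp_refl root_B_self pos_root by (metis comp_assoc id_comp)

lemma mem_N_refl_comp:
  assumes u: "u \<in> W" and \<beta>: "\<beta> \<in> pos" and n\<beta>: "\<beta> \<notin> N u"
  shows "\<beta> \<in> N (refl r A \<beta> \<circ> u)"
proof -
  obtain v where v: "v \<in> W" "u \<circ> v = id" using W_inverse u by blast
  define \<gamma> where "\<gamma> = v (- \<beta>)"
  have \<gamma>: "\<gamma> \<in> rts" using \<gamma>_def W_root v root_uminus pos_root \<beta> by blast
  have u\<gamma>: "u \<gamma> = - \<beta>" using v \<gamma>_def by (metis comp_apply id_apply)
  have "\<gamma> \<in> neg"
  proof (rule ccontr)
    assume "\<gamma> \<notin> neg"
    then have "- \<gamma> \<in> neg" using root_pos_or_neg \<gamma> neg_iff by (metis vec_uminus_uminus)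
    moreover have "u (- \<gamma>) = \<beta>" using W_uminus[OF u] u\<gamma> by simp
    ultimately show False using n\<beta> \<beta> unfolding inv_set_def by blast
  qed
  moreover have "refl r A \<beta> (u \<gamma>) = \<beta>"
    using u\<gamma> refl_self[OF root_B_self[OF pos_root[OF \<beta>]]] zlinear_uminus[OF refl_zlinear] by simp
  ultimately show ?thesis using \<beta> unfolding inv_set_def by force
qed

lemma len_refl_comp_less_iff:
  assumes u: "u \<in> W" and \<beta>: "\<beta> \<in> pos"
  shows "len (refl r A \<beta> \<circ> u) < len u \<longleftrightarrow> \<beta> \<in> N u"
    and "len (refl r A \<beta> \<circ> u) \<noteq> len u"
proof -
  have "refl r A \<beta> \<circ> u \<in> W" using W_comp refl_root_in_W pos_root \<beta> u by blast
  then have up: "\<beta> \<notin> N u \<Longrightarrow> len u < len (refl r A \<beta> \<circ> u)"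
    using len_refl_inversion_less mem_N_refl_comp[OF u \<beta>] refl_refl_comp[OF \<beta>] by metis
  then show "len (refl r A \<beta> \<circ> u) < len u \<longleftrightarrow> \<beta> \<in> N u"
    using len_refl_inversion_less[OF u] by (meson less_asym)
  show "len (refl r A \<beta> \<circ> u) \<noteq> len u"
    using len_refl_inversion_less[OF u] up by fastforce
qed

lemma left_descent_iff: "u \<in> W \<Longrightarrow> j < r \<Longrightarrow> len (sr j \<circ> u) < len u \<longleftrightarrow> simple j \<in> N u"
  using len_refl_comp_less_iff simple_pos by blast

section \<open>Powers of \<open>D\<^sub>i\<close> via the Chevalley formula\<close>

definition only_left_descent :: "nat \<Rightarrow> weyl \<Rightarrow> bool" where
  "only_left_descent i u \<longleftrightarrow> (\<forall>j<r. j \<noteq> i \<longrightarrow> simple j \<notin> N u)"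

definition inversions_involve :: "nat \<Rightarrow> weyl \<Rightarrow> bool" where
  "inversions_involve i u \<longleftrightarrow> (\<forall>\<beta>\<in>N u. \<beta> i > 0)"

lemma in_lattice_expand: "Q \<beta> \<Longrightarrow> \<beta> = (\<lambda>k. \<Sum>j<r. \<beta> j * simple j k)"
proof
  fix k assume q: "Q \<beta>"
  show "\<beta> k = (\<Sum>j<r. \<beta> j * simple j k)"
  proof (cases "k < r")
    case True
    have "(\<Sum>j<r. \<beta> j * simple j k) = (\<Sum>j<r. if j = k then \<beta> j else 0)"
      by (rule sum.cong) (auto simp: simple_def)
    then show ?thesis using True by simp
  next
    case False
    then show ?thesis using q unfolding in_lattice_def by (simp add: simple_def)
  qed
qed

lemma neg_root_has_neg_coord: "\<delta> \<in> neg \<Longrightarrow> \<exists>k. \<delta> k < 0"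
  using root_nonzero neg_iff_nonpos by (metis antisym not_le)

text \<open>If \<open>\<beta> \<in> N u\<close> had \<open>\<beta> i = 0\<close>, then \<open>u\<inverse> \<beta> = \<Sum>\<^sub>j \<beta> j \<cdot> u\<inverse> \<alpha>\<^sub>j\<close> would be a
  nonnegative combination of the positive roots \<open>u\<inverse> \<alpha>\<^sub>j\<close> (\<open>j \<noteq> i\<close>), yet it is negative.\<close>
lemma inversions_involve_if_only_left_descent:
  assumes u: "u \<in> W" and "only_left_descent i u"
  shows "inversions_involve i u"
  unfolding inversions_involve_def
proof (rule ballI, rule ccontr)
  fix \<beta> assume \<beta>: "\<beta> \<in> N u" and "\<not> \<beta> i > 0"
  moreover have \<beta>pos: "\<beta> \<in> pos" using \<beta> N_subset_pos by blast
  ultimately have \<beta>i: "\<beta> i = 0" using pos_iff by (meson antisym not_less)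
  obtain \<delta> where \<delta>: "\<delta> \<in> neg" "\<beta> = u \<delta>" using \<beta> unfolding inv_set_def by blast
  obtain v where v: "v \<in> W" "u \<circ> v = id" "v \<circ> u = id" using W_inverse u by blast
  have v_simple_pos: "v (simple j) \<in> pos" if "j < r" "j \<noteq> i" for j
  proof (rule ccontr)
    assume "v (simple j) \<notin> pos"
    then have "v (simple j) \<in> neg" using W_simple_pos_or_neg v that by blast
    moreover have "u (v (simple j)) = simple j" using v(2) by (metis comp_apply id_apply)
    ultimately have "simple j \<in> N u" using simple_pos[OF that(1)] unfolding inv_set_def by force
    then show False using assms(2) that unfolding only_left_descent_def by blast
  qed
  have "v \<beta> = (\<lambda>k. \<Sum>j<r. \<beta> j * v (simple j) k)"
    using in_lattice_expand[OF root_in_lattice[OF pos_root[OF \<beta>pos]]]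
      zlinear_sum[OF W_zlinear[OF v(1)], of "{..<r}"] by (metis finite_lessThan)
  moreover have "\<beta> j * v (simple j) k \<ge> 0" if "j < r" for j k
    using v_simple_pos[of j] \<beta>i \<beta>pos pos_iff that by (cases "j = i") auto
  ultimately have "v \<beta> k \<ge> 0" for k by (auto intro!: sum_nonneg)
  moreover have "v \<beta> = \<delta>" using \<delta>(2) v(3) by (metis comp_apply id_apply)
  ultimately show False using neg_root_has_neg_coord[OF \<delta>(1)] by (metis not_le)
qed

definition chevalley_roots :: "weyl \<Rightarrow> vec set" where
  "chevalley_roots u = {\<beta> \<in> pos. len (refl r A \<beta> \<circ> u) + 1 = len u}"

lemma chevalley_roots_subset_N: "u \<in> W \<Longrightarrow> chevalley_roots u \<subseteq> N u"
  unfolding chevalley_roots_def using len_refl_comp_less_iff by fastforce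

lemma chevalley_roots_finite: "u \<in> W \<Longrightarrow> finite (chevalley_roots u)"
  using chevalley_roots_subset_N N_finite finite_subset by blast

lemma chevalley_roots_coord_nonneg: "\<beta> \<in> chevalley_roots u \<Longrightarrow> \<beta> i \<ge> 0"
  unfolding chevalley_roots_def using pos_iff by blast

lemma Dmul_eq:
  "Dmul r A i c u = (if u \<in> W then (\<Sum>\<beta>\<in>chevalley_roots u. \<beta> i * c (refl r A \<beta> \<circ> u)) else 0)"
  unfolding Dmul_def chevalley_roots_def by simp

definition Dpow :: "nat \<Rightarrow> nat \<Rightarrow> weyl \<Rightarrow> int" where
  "Dpow i k = (Dmul r A i ^^ k) chow_one"

lemma Dpow_0: "Dpow i 0 u = (if u = id then 1 else 0)"
  by (simp add: Dpow_def chow_one_def)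

lemma Dpow_Suc:
  "Dpow i (Suc k) u = (if u \<in> W then (\<Sum>\<beta>\<in>chevalley_roots u. \<beta> i * Dpow i k (refl r A \<beta> \<circ> u)) else 0)"
  by (simp add: Dpow_def Dmul_eq)

lemma Ccoef_single_eq_Dpow: "i < r \<Longrightarrow> Ccoef r A w (\<lambda>j. if j = i then n else 0) = Dpow i n w"
proof -
  have "distinct xs \<Longrightarrow> foldr (\<lambda>j c. (Dmul r A j ^^ (if j = i then n else 0)) c) xs c0
      = (if i \<in> set xs then (Dmul r A i ^^ n) c0 else c0)" for xs c0
    by (induction xs) auto
  then show "i < r \<Longrightarrow> ?thesis" unfolding Ccoef_def Dpow_def by simp
qed

lemma Dpow_nonneg: "Dpow i k u \<ge> 0"
  by (induction k arbitrary: u)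
     (auto simp: Dpow_0 Dpow_Suc chevalley_roots_coord_nonneg intro!: sum_nonneg)

lemma Dpow_nonzero_imp: "Dpow i k u \<noteq> 0 \<Longrightarrow> u \<in> W \<and> len u = k"
proof (induction k arbitrary: u)
  case 0
  then have "u = id" by (simp add: Dpow_0 split: if_splits)
  then show ?case using id_in_W len_id by metis
next
  case (Suc k)
  then have u: "u \<in> W" and "(\<Sum>\<beta>\<in>chevalley_roots u. \<beta> i * Dpow i k (refl r A \<beta> \<circ> u)) \<noteq> 0"
    by (auto simp: Dpow_Suc split: if_splits)
  then obtain \<beta> where "\<beta> \<in> chevalley_roots u" "\<beta> i * Dpow i k (refl r A \<beta> \<circ> u) \<noteq> 0"
    by (meson sum.neutral)
  then show ?case using Suc.IH u unfolding chevalley_roots_def by fastforce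
qed

lemma Dpow_Suc_pos_imp:
  assumes "Dpow i (Suc k) u > 0"
  obtains \<beta> where "u \<in> W" "\<beta> \<in> chevalley_roots u" "\<beta> i > 0" "Dpow i k (refl r A \<beta> \<circ> u) > 0"
proof -
  have u: "u \<in> W" using assms by (auto simp: Dpow_Suc split: if_splits)
  obtain \<beta> where \<beta>: "\<beta> \<in> chevalley_roots u" "\<beta> i * Dpow i k (refl r A \<beta> \<circ> u) > 0"
    using assms u by (auto simp: Dpow_Suc not_le[symmetric] intro: sum_nonpos)
  moreover have "\<beta> i \<ge> 0" "Dpow i k (refl r A \<beta> \<circ> u) \<ge> 0"
    using \<beta>(1) chevalley_roots_coord_nonneg Dpow_nonneg by auto
  ultimately show thesis using that u by (simp add: zero_less_mult_iff)
qed

text \<open>If some \<open>\<sigma>\<^sub>j\<close>, \<open>j \<noteq> i\<close>, were a left descent of \<open>\<sigma>\<^sub>\<beta> v\<close>, conjugating by \<open>\<sigma>\<^sub>j\<close> would show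
  that \<open>\<sigma>\<^sub>j \<beta>\<close> shortens the longer element \<open>\<sigma>\<^sub>j v\<close>, hence \<open>\<beta> \<in> N v\<close>, so \<open>\<sigma>\<^sub>\<beta>\<close> would shorten \<open>v\<close>.\<close>
lemma only_left_descent_refl_up:
  assumes v: "v \<in> W" and "only_left_descent i v" and \<beta>: "\<beta> \<in> pos" "\<beta> i > 0"
    and up: "len (refl r A \<beta> \<circ> v) = len v + 1"
  shows "only_left_descent i (refl r A \<beta> \<circ> v)"
  unfolding only_left_descent_def
proof (intro allI impI notI)
  fix j assume j: "j < r" "j \<noteq> i" and jN: "simple j \<in> N (refl r A \<beta> \<circ> v)"
  define u where "u = refl r A \<beta> \<circ> v"
  have uW: "u \<in> W" using W_comp refl_root_in_W pos_root \<beta>(1) v u_def by blast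
  have jv: "simple j \<notin> N v" using assms(2) j unfolding only_left_descent_def by blast
  have x: "sr j \<circ> v \<in> W" using W_comp sr_in_W j(1) v by blast
  have "len (sr j \<circ> v) \<le> len v + 1"
    using len_comp_le[OF sr_in_W[OF j(1)] v] len_sr_le[OF j(1)] by simp
  moreover have "\<not> len (sr j \<circ> v) < len v" using left_descent_iff[OF v j(1)] jv by blast
  moreover have "len (sr j \<circ> v) \<noteq> len v" using len_refl_comp_less_iff(2)[OF v simple_pos[OF j(1)]] .
  ultimately have lx: "len (sr j \<circ> v) = len v + 1" by simp
  have "\<beta> \<noteq> simple j" using \<beta>(2) j(2) by (auto simp: simple_def)
  then have \<gamma>: "sr j \<beta> \<in> pos" using sr_pos[OF j(1) \<beta>(1)] by blast
  have "refl r A (sr j \<beta>) \<circ> sr j = sr j \<circ> refl r A \<beta>"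
    using W_refl_conj[OF sr_in_W[OF j(1)]] by simp
  then have e: "sr j \<circ> u = refl r A (sr j \<beta>) \<circ> (sr j \<circ> v)" unfolding u_def by (metis comp_assoc)
  have "len (sr j \<circ> u) < len u" using left_descent_iff[OF uW j(1)] jN u_def by blast
  then have "len (refl r A (sr j \<beta>) \<circ> (sr j \<circ> v)) < len (sr j \<circ> v)" using e lx up u_def by simp
  then have "sr j \<beta> \<in> N (sr j \<circ> v)" using len_refl_comp_less_iff(1)[OF x \<gamma>] by blast
  then obtain \<epsilon> where \<epsilon>: "\<epsilon> \<in> neg" "sr j \<beta> = sr j (v \<epsilon>)" unfolding inv_set_def by auto
  then have "v \<epsilon> = \<beta>" using sr_sr[OF j(1)] by metis
  then have "\<beta> \<in> N v" using \<epsilon>(1) \<beta>(1) unfolding inv_set_def by blast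
  then have "len (refl r A \<beta> \<circ> v) < len v" using len_refl_comp_less_iff(1)[OF v \<beta>(1)] by blast
  then show False using up by linarith
qed

lemma only_left_descent_if_Dpow_pos: "Dpow i k u > 0 \<Longrightarrow> only_left_descent i u"
proof (induction k arbitrary: u)
  case 0
  then show ?case using N_id by (simp add: Dpow_0 only_left_descent_def split: if_splits)
next
  case (Suc k)
  obtain \<beta> where u: "u \<in> W" and \<beta>: "\<beta> \<in> chevalley_roots u" "\<beta> i > 0"
      "Dpow i k (refl r A \<beta> \<circ> u) > 0"
    using Dpow_Suc_pos_imp[OF Suc.prems] by blast
  define v where "v = refl r A \<beta> \<circ> u"
  have \<beta>pos: "\<beta> \<in> pos" using \<beta>(1) unfolding chevalley_roots_def by blast
  have vW: "v \<in> W" and "len v = k" using Dpow_nonzero_imp[of i k v] \<beta>(3) v_def by auto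
  have u: "u = refl r A \<beta> \<circ> v" unfolding v_def by (rule refl_refl_comp[OF \<beta>pos, symmetric])
  have "len u = len v + 1" using \<beta>(1) unfolding chevalley_roots_def v_def by simp
  then have "len (refl r A \<beta> \<circ> v) = len v + 1" unfolding u .
  moreover have "only_left_descent i v" using Suc.IH \<beta>(3) v_def by simp
  ultimately show ?case unfolding u using only_left_descent_refl_up[OF vW _ \<beta>pos \<beta>(2)] by blast
qed

lemma Dpow_Suc_ge_partial_sum:
  assumes "u \<in> W" and "F \<subseteq> chevalley_roots u"
  shows "(\<Sum>\<beta>\<in>F. \<beta> i * Dpow i k (refl r A \<beta> \<circ> u)) \<le> Dpow i (Suc k) u"
  unfolding Dpow_Suc using assms(1)
  by (simp, intro sum_mono2[OF chevalley_roots_finite[OF assms(1)] assms(2)])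
     (auto simp: chevalley_roots_coord_nonneg Dpow_nonneg)

lemma right_descent_chevalley_root:
  assumes u: "u \<in> W" and t: "t < r" "u (simple t) \<in> neg"
  shows "- u (simple t) \<in> chevalley_roots u" and "refl r A (- u (simple t)) \<circ> u = u \<circ> sr t"
proof -
  show conj: "refl r A (- u (simple t)) \<circ> u = u \<circ> sr t"
    using refl_uminus W_refl_conj[OF u] by simp
  have "- u (simple t) \<in> pos" using N_comp_sr_down(2)[OF u t] N_subset_pos by blast
  then show "- u (simple t) \<in> chevalley_roots u"
    using len_comp_sr_down[OF u t] conj unfolding chevalley_roots_def by simp
qed

lemma Dpow_pos_if_inversions_involve:
  "u \<in> W \<Longrightarrow> inversions_involve i u \<Longrightarrow> len u = k \<Longrightarrow> Dpow i k u > 0"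
proof (induction k arbitrary: u)
  case 0
  then show ?case using len_eq_0_imp_id by (simp add: Dpow_0)
next
  case (Suc k)
  obtain t where t: "t < r" "u (simple t) \<in> neg"
    using right_descent_exists[OF Suc.prems(1)] Suc.prems(3) by auto
  define \<gamma> where "\<gamma> = - u (simple t)"
  have \<gamma>: "\<gamma> \<in> chevalley_roots u" "refl r A \<gamma> \<circ> u = u \<circ> sr t"
    using right_descent_chevalley_root[OF Suc.prems(1) t] \<gamma>_def by auto
  have "\<gamma> i > 0"
    using \<gamma>(1) chevalley_roots_subset_N[OF Suc.prems(1)] Suc.prems(2)
    unfolding inversions_involve_def by blast
  moreover have "Dpow i k (u \<circ> sr t) > 0"
    using Suc.IH W_comp[OF Suc.prems(1) sr_in_W[OF t(1)]] len_comp_sr_down[OF Suc.prems(1) t]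
      N_comp_sr_down(1)[OF Suc.prems(1) t] Suc.prems(2,3)
    unfolding inversions_involve_def by auto
  ultimately have "0 < \<gamma> i * Dpow i k (refl r A \<gamma> \<circ> u)" using \<gamma>(2) by simp
  also have "\<dots> \<le> Dpow i (Suc k) u"
    using Dpow_Suc_ge_partial_sum[OF Suc.prems(1), of "{\<gamma>}"] \<gamma>(1) by simp
  finally show ?case .
qed

lemma right_descent_Dpow_term_pos:
  assumes u: "u \<in> W" and inv: "inversions_involve i u" and t: "t < r" "u (simple t) \<in> neg"
  shows "(- u (simple t)) i > 0" and "Dpow i (len u - 1) (u \<circ> sr t) > 0"
proof -
  show "(- u (simple t)) i > 0"
    using N_comp_sr_down(2)[OF u t] inv unfolding inversions_involve_def by blast
  have "inversions_involve i (u \<circ> sr t)"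
    using N_comp_sr_down(1)[OF u t] inv unfolding inversions_involve_def by auto
  moreover have "len (u \<circ> sr t) = len u - 1" using len_comp_sr_down[OF u t] by simp
  ultimately show "Dpow i (len u - 1) (u \<circ> sr t) > 0"
    using Dpow_pos_if_inversions_involve W_comp[OF u sr_in_W[OF t(1)]] by blast
qed

end

section \<open>Paths in the Dynkin diagram\<close>

definition simple_sum :: "nat list \<Rightarrow> vec" where
  "simple_sum xs = (\<lambda>j. \<Sum>x\<leftarrow>xs. simple x j)"

definition partial_sums :: "nat list \<Rightarrow> vec list" where
  "partial_sums xs = map (\<lambda>k. simple_sum (take k xs)) [0..<length xs + 1]"

lemma simple_sum_Nil: "simple_sum [] = (\<lambda>_. 0)"
  by (simp add: simple_sum_def)

lemma simple_sum_Cons: "simple_sum (x # xs) = (\<lambda>j. simple x j + simple_sum xs j)"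
  by (simp add: simple_sum_def)

lemma simple_sum_snoc: "simple_sum (xs @ [x]) = (\<lambda>j. simple_sum xs j + simple x j)"
  by (simp add: simple_sum_def)

lemma simple_sum_distinct: "distinct xs \<Longrightarrow> simple_sum xs j = (if j \<in> set xs then 1 else 0)"
  by (induction xs) (auto simp: simple_sum_Nil simple_sum_Cons simple_def)

lemma simple_sum_notin: "j \<notin> set xs \<Longrightarrow> simple_sum xs j = 0"
  by (induction xs) (auto simp: simple_sum_Nil simple_sum_Cons simple_def)

lemma simple_sum_nonneg: "simple_sum xs j \<ge> 0"
  by (induction xs) (auto simp: simple_sum_Nil simple_sum_Cons simple_def)

lemma simple_sum_height: "set xs \<subseteq> {..<r} \<Longrightarrow> (\<Sum>j<r. simple_sum xs j) = int (length xs)"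
  by (induction xs) (auto simp: simple_sum_Nil simple_sum_Cons sum.distrib simple_def)

lemma partial_sums_length: "length (partial_sums xs) = length xs + 1"
  unfolding partial_sums_def by simp

lemma partial_sums_nth: "k \<le> length xs \<Longrightarrow> partial_sums xs ! k = simple_sum (take k xs)"
  unfolding partial_sums_def by (simp add: nth_append del: upt_Suc)

lemma partial_sums_1: "xs \<noteq> [] \<Longrightarrow> partial_sums xs ! 1 = simple (xs ! 0)"
  by (cases xs) (simp_all add: partial_sums_nth simple_sum_def)

context simply_laced
begin

definition is_path :: "nat list \<Rightarrow> bool" where
  "is_path xs \<longleftrightarrow> (\<forall>t<length xs. xs ! t < r) \<and>
     (\<forall>t. t + 1 < length xs \<longrightarrow> A (xs ! t) (xs ! (t + 1)) = -1) \<and>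
     (\<forall>t t'. t < length xs \<and> t' < length xs \<and> (t' > t + 1 \<or> t > t' + 1) \<longrightarrow> A (xs ! t) (xs ! t') = 0)"

lemma is_path_lt: "is_path xs \<Longrightarrow> t < length xs \<Longrightarrow> xs ! t < r"
  unfolding is_path_def by blast

lemma is_path_adj: "is_path xs \<Longrightarrow> t + 1 < length xs \<Longrightarrow> A (xs ! t) (xs ! (t + 1)) = -1"
  unfolding is_path_def by blast

lemma is_path_far:
  "is_path xs \<Longrightarrow> t < length xs \<Longrightarrow> t' < length xs \<Longrightarrow> t' > t + 1 \<or> t > t' + 1 \<Longrightarrow> A (xs ! t) (xs ! t') = 0"
  unfolding is_path_def by blast

lemma is_path_set: "is_path xs \<Longrightarrow> set xs \<subseteq> {..<r}"
  unfolding is_path_def by (auto simp: in_set_conv_nth)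

lemma is_path_distinct: "is_path xs \<Longrightarrow> distinct xs"
proof (unfold distinct_conv_nth, intro allI impI)
  fix t t' assume p: "is_path xs" and tt: "t < length xs" "t' < length xs" "t \<noteq> t'"
  show "xs ! t \<noteq> xs ! t'"
  proof
    assume e: "xs ! t = xs ! t'"
    then have "A (xs ! t) (xs ! t') = 2" "A (xs ! t') (xs ! t) = 2"
      using A_diag is_path_lt[OF p tt(2)] by simp_all
    moreover consider "t' = t + 1" | "t = t' + 1" | "t' > t + 1 \<or> t > t' + 1" using tt(3) by linarith
    ultimately show False using is_path_adj[OF p] is_path_far[OF p tt(1,2)] tt by cases force+
  qed
qed

lemma is_path_take: "is_path xs \<Longrightarrow> is_path (take k xs)"
  unfolding is_path_def by auto

lemma is_path_drop:
  assumes p: "is_path xs"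
  shows "is_path (drop k xs)"
  unfolding is_path_def
proof (intro conjI allI impI)
  fix t assume "t < length (drop k xs)"
  then show "drop k xs ! t < r" using is_path_lt[OF p] by auto
next
  fix t assume "t + 1 < length (drop k xs)"
  then show "A (drop k xs ! t) (drop k xs ! (t + 1)) = -1"
    using is_path_adj[OF p, of "k + t"] by (simp add: add.assoc)
next
  fix t t' assume "t < length (drop k xs) \<and> t' < length (drop k xs) \<and> (t' > t + 1 \<or> t > t' + 1)"
  then show "A (drop k xs ! t) (drop k xs ! t') = 0" using is_path_far[OF p, of "k + t" "k + t'"] by auto
qed

lemma is_path_snoc:
  assumes p: "is_path xs" and j: "j < r"
    and last: "xs \<noteq> [] \<Longrightarrow> A (last xs) j = -1"
    and far: "\<And>t. t + 1 < length xs \<Longrightarrow> A (xs ! t) j = 0"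
  shows "is_path (xs @ [j])"
  unfolding is_path_def
proof (intro conjI allI impI)
  fix t assume "t < length (xs @ [j])"
  then show "(xs @ [j]) ! t < r" using is_path_lt[OF p] j by (auto simp: nth_append)
next
  fix t assume t: "t + 1 < length (xs @ [j])"
  show "A ((xs @ [j]) ! t) ((xs @ [j]) ! (t + 1)) = -1"
  proof (cases "t + 1 < length xs")
    case True
    then show ?thesis using is_path_adj[OF p True] by (simp add: nth_append)
  next
    case False
    then have "t + 1 = length xs" using t by simp
    moreover from this have "xs \<noteq> []" by auto
    moreover from calculation have "xs ! t = last xs"
      using last_conv_nth[of xs] by (metis add_diff_cancel_right')
    ultimately show ?thesis using last by (simp add: nth_append)
  qed
next
  fix t t' assume tt: "t < length (xs @ [j]) \<and> t' < length (xs @ [j]) \<and> (t' > t + 1 \<or> t > t' + 1)"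
  show "A ((xs @ [j]) ! t) ((xs @ [j]) ! t') = 0"
  proof (cases "t < length xs \<and> t' < length xs")
    case True
    then show ?thesis using is_path_far[OF p] tt by (simp add: nth_append)
  next
    case False
    then consider "t = length xs" "t' + 1 < length xs" | "t' = length xs" "t + 1 < length xs"
      using tt by auto
    then show ?thesis
      using far A_sym j is_path_lt[OF p] by cases (auto simp: nth_append)
  qed
qed

lemma is_path_sum_A_head:
  assumes p: "is_path (x # ys)" and ne: "ys \<noteq> []"
  shows "(\<Sum>y\<leftarrow>ys. A y x) = -1"
proof -
  have x: "x < r" using is_path_lt[OF p, of 0] by simp
  have "A (ys ! t) x = (if t = 0 then -1 else 0)" if t: "t < length ys" for t
  proof -
    have "ys ! t < r" using is_path_lt[OF p, of "Suc t"] t by simp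
    moreover have "A x (ys ! t) = (if t = 0 then -1 else 0)"
      using is_path_adj[OF p, of 0] is_path_far[OF p, of 0 "Suc t"] t by auto
    ultimately show ?thesis using A_sym x by simp
  qed
  then have "(\<Sum>y\<leftarrow>ys. A y x) = (\<Sum>t<length ys. if t = 0 then -1 else 0)"
    by (simp add: sum_list_sum_nth atLeast0LessThan)
  then show ?thesis using ne by simp
qed

lemma B_simple_sum_simple:
  "set xs \<subseteq> {..<r} \<Longrightarrow> a < r \<Longrightarrow> B (simple_sum xs) (simple a) = (\<Sum>x\<leftarrow>xs. A x a)"
  by (induction xs) (simp_all add: simple_sum_Nil simple_sum_Cons B_zero_left B_add_left B_simple)

text \<open>Along a path the reflections act by adding the next simple root.\<close>
lemma wd_path_simple: "is_path (p @ [a]) \<Longrightarrow> wd p (simple a) = simple_sum (p @ [a])"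
proof (induction p)
  case Nil
  then show ?case by (simp add: wd_Nil simple_sum_def)
next
  case (Cons x p)
  have p': "is_path (p @ [a])" using is_path_drop[OF Cons.prems, of 1] by simp
  have x: "x < r" using is_path_lt[OF Cons.prems, of 0] by simp
  have "B (simple_sum (p @ [a])) (simple x) = -1"
    using B_simple_sum_simple[OF is_path_set[OF p'] x] is_path_sum_A_head[of x "p @ [a]"] Cons.prems
    by simp
  then show ?case using Cons.IH[OF p'] by (simp add: wd_Cons simple_sum_Cons refl_def add.commute)
qed

lemma simple_sum_in_lattice: "set xs \<subseteq> {..<r} \<Longrightarrow> Q (simple_sum xs)"
  unfolding in_lattice_def using simple_sum_notin by (metis leD lessThan_iff subsetD)

lemma path_simple_sum_pos: "is_path xs \<Longrightarrow> xs \<noteq> [] \<Longrightarrow> simple_sum xs \<in> pos"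
proof -
  assume p: "is_path xs" and "xs \<noteq> []"
  then obtain q a where qa: "xs = q @ [a]" by (metis rev_exhaust)
  then have "simple_sum xs = wd q (simple a)" using wd_path_simple p by simp
  moreover have "wd q \<in> W" "a < r" using wd_in_W is_path_set[OF p] qa by auto
  ultimately have "simple_sum xs \<in> rts" using W_root simple_root by simp
  then show ?thesis using pos_iff simple_sum_nonneg by blast
qed

lemma path_prefix_len_N:
  assumes p: "is_path xs" and k: "k \<le> length xs"
  shows "len (wd (take k xs)) = k \<and> N (wd (take k xs)) = {simple_sum (take t xs) | t. t \<in> {1..k}}"
  using k
proof (induction k)
  case 0
  have "N (wd []) = {}" "len (wd []) = 0" using N_id len_id wd_Nil by simp_all
  then show ?case by simp
next
  case (Suc k)
  then have k: "k < length xs" by simp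
  have tk: "take (Suc k) xs = take k xs @ [xs ! k]" using k by (simp add: take_Suc_conv_app_nth)
  have u: "wd (take k xs) \<in> W" "xs ! k < r"
    using wd_in_W is_path_set[OF is_path_take[OF p]] is_path_lt[OF p k] by auto
  have w: "wd (take (Suc k) xs) = wd (take k xs) \<circ> sr (xs ! k)" using tk wd_snoc by simp
  have e: "wd (take k xs) (simple (xs ! k)) = simple_sum (take (Suc k) xs)"
    using wd_path_simple is_path_take[OF p, of "Suc k"] tk by simp
  have "take (Suc k) xs \<noteq> []" using k by auto
  then have ep: "simple_sum (take (Suc k) xs) \<in> pos"
    using path_simple_sum_pos[OF is_path_take[OF p, of "Suc k"]] by blast
  have IH: "len (wd (take k xs)) = k" "N (wd (take k xs)) = {simple_sum (take t xs) | t. t \<in> {1..k}}"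
    using Suc k by auto
  have "len (wd (take (Suc k) xs)) = Suc k" using len_comp_sr_up[OF u] e ep IH w by simp
  moreover have "N (wd (take (Suc k) xs)) = insert (simple_sum (take (Suc k) xs)) (N (wd (take k xs)))"
    using N_comp_sr_up(1)[OF u] e ep w by simp
  moreover have "insert (simple_sum (take (Suc k) xs)) {simple_sum (take t xs) | t. t \<in> {1..k}}
      = {simple_sum (take t xs) | t. t \<in> {1..Suc k}}"
    by (auto simp: le_Suc_eq)
  ultimately show ?case using IH by simp
qed

lemma path_len: "is_path xs \<Longrightarrow> len (wd xs) = length xs"
  using path_prefix_len_N[of xs "length xs"] by simp

lemma path_N: "is_path xs \<Longrightarrow> N (wd xs) = {simple_sum (take t xs) | t. t \<in> {1..length xs}}"
  using path_prefix_len_N[of xs "length xs"] by simp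

lemma path_N_eq_partial_sums:
  assumes "is_path xs"
  shows "N (wd xs) = {partial_sums xs ! j | j. j \<in> {1..length xs}}"
  unfolding path_N[OF assms] Setcompr_eq_image by (rule image_cong) (auto simp: partial_sums_nth)

lemma refl_prod_partial_sums:
  assumes p: "is_path xs"
  shows "refl_prod r A (partial_sums xs) = wd xs"
proof -
  let ?F = "\<lambda>k. fold (\<lambda>\<beta> f. refl r A \<beta> \<circ> f) (map (\<lambda>k. simple_sum (take k xs)) [1..<k + 1]) id"
  have "k \<le> length xs \<Longrightarrow> ?F k = wd (take k xs)" for k
  proof (induction k)
    case 0
    then show ?case by (simp add: wd_Nil)
  next
    case (Suc k)
    then have k: "k < length xs" by simp
    have tk: "take (Suc k) xs = take k xs @ [xs ! k]" using k by (simp add: take_Suc_conv_app_nth)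
    have u: "wd (take k xs) \<in> W" using wd_in_W is_path_set[OF is_path_take[OF p]] by blast
    have e: "simple_sum (take (Suc k) xs) = wd (take k xs) (simple (xs ! k))"
      using wd_path_simple is_path_take[OF p, of "Suc k"] tk by simp
    have "[1..<Suc k + 1] = [1..<k + 1] @ [Suc k]" by simp
    then have "?F (Suc k) = refl r A (simple_sum (take (Suc k) xs)) \<circ> ?F k"
      by (simp only: map_append fold_append list.map fold_Cons fold_Nil comp_apply id_apply)
    also have "\<dots> = refl r A (simple_sum (take (Suc k) xs)) \<circ> wd (take k xs)"
      by (simp only: Suc.IH[OF less_imp_le[OF k]])
    also have "\<dots> = wd (take (Suc k) xs)" using e W_refl_conj[OF u] tk wd_snoc by simp
    finally show ?case .
  qed
  moreover have "tl (partial_sums xs) = map (\<lambda>k. simple_sum (take k xs)) [1..<length xs + 1]"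
    unfolding partial_sums_def by (simp add: upt_conv_Cons del: upt_Suc)
  ultimately show ?thesis unfolding refl_prod_def by simp
qed

lemma path_originating_partial_sums:
  assumes p: "is_path xs"
  shows "path_originating r A (partial_sums xs)"
proof -
  define bs where "bs = partial_sums xs"
  have "path_originating r A bs"
    unfolding path_originating_def
  proof (intro conjI)
    show "bs \<noteq> []" "bs ! 0 = (\<lambda>_. 0)"
      using partial_sums_length[of xs] partial_sums_nth[of 0 xs] simple_sum_Nil bs_def by auto
    show "\<forall>j\<in>{1..<length bs}. bs ! j \<in> pos"
    proof
      fix j assume "j \<in> {1..<length bs}"
      then have j: "1 \<le> j" "j \<le> length xs" using partial_sums_length bs_def by auto
      then have "take j xs \<noteq> []" by auto
      then show "bs ! j \<in> pos"
        using path_simple_sum_pos[OF is_path_take[OF p]] partial_sums_nth j bs_def by simp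
    qed
    show "\<exists>is. length is + 1 = length bs \<and>
        (\<forall>t<length is. is ! t < r \<and> bs ! (t + 1) = (\<lambda>m. (bs ! t) m + simple (is ! t) m)) \<and>
        (\<forall>t. t + 1 < length is \<longrightarrow> B (simple (is ! t)) (simple (is ! (t + 1))) = -1) \<and>
        (\<forall>t t'. t < length is \<and> t' < length is \<and> (t' > t + 1 \<or> t > t' + 1) \<longrightarrow>
            B (simple (is ! t)) (simple (is ! t')) = 0)"
    proof (intro exI[of _ xs] conjI allI impI)
      show "length xs + 1 = length bs" using partial_sums_length bs_def by simp
    next
      fix t assume t: "t < length xs"
      then show "xs ! t < r" using is_path_lt[OF p] by blast
      show "bs ! (t + 1) = (\<lambda>m. (bs ! t) m + simple (xs ! t) m)"
        using t by (simp add: bs_def partial_sums_nth take_Suc_conv_app_nth simple_sum_snoc)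
    next
      fix t assume "t + 1 < length xs"
      then show "B (simple (xs ! t)) (simple (xs ! (t + 1))) = -1"
        using B_simple is_path_lt[OF p] is_path_adj[OF p] by simp
    next
      fix t t' assume "t < length xs \<and> t' < length xs \<and> (t' > t + 1 \<or> t > t' + 1)"
      then show "B (simple (xs ! t)) (simple (xs ! t')) = 0"
        using B_simple is_path_lt[OF p] is_path_far[OF p] by simp
    qed
  qed
  then show ?thesis unfolding bs_def .
qed

lemma path_originating_imp_partial_sums:
  assumes po: "path_originating r A bs"
  shows "\<exists>xs. is_path xs \<and> bs = partial_sums xs"
proof -
  obtain xs where l: "length xs + 1 = length bs"
    and st: "\<forall>t<length xs. xs ! t < r \<and> bs ! (t + 1) = (\<lambda>m. (bs ! t) m + simple (xs ! t) m)"
    and adj: "\<forall>t. t + 1 < length xs \<longrightarrow> B (simple (xs ! t)) (simple (xs ! (t + 1))) = -1"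
    and far: "\<forall>t t'. t < length xs \<and> t' < length xs \<and> (t' > t + 1 \<or> t > t' + 1) \<longrightarrow>
            B (simple (xs ! t)) (simple (xs ! t')) = 0"
    using po unfolding path_originating_def by blast
  have "is_path xs"
    unfolding is_path_def
  proof (intro conjI allI impI)
    fix t assume "t < length xs"
    then show "xs ! t < r" using st by blast
  next
    fix t assume "t + 1 < length xs"
    then show "A (xs ! t) (xs ! (t + 1)) = -1" using adj B_simple st by force
  next
    fix t t' assume "t < length xs \<and> t' < length xs \<and> (t' > t + 1 \<or> t > t' + 1)"
    then show "A (xs ! t) (xs ! t') = 0" using far B_simple st by force
  qed
  moreover have "k \<le> length xs \<Longrightarrow> bs ! k = simple_sum (take k xs)" for k
  proof (induction k)
    case 0
    then show ?case using po simple_sum_Nil unfolding path_originating_def by simp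
  next
    case (Suc k)
    then show ?case using st by (simp add: take_Suc_conv_app_nth simple_sum_snoc)
  qed
  then have "bs = partial_sums xs"
    by (intro nth_equalityI) (use l partial_sums_length partial_sums_nth in auto)
  ultimately show ?thesis by blast
qed

lemma path_originating_iff: "path_originating r A bs \<longleftrightarrow> (\<exists>xs. is_path xs \<and> bs = partial_sums xs)"
  using path_originating_partial_sums path_originating_imp_partial_sums by blast

lemma path_prefix_sum_first_coord:
  assumes p: "is_path xs" and "1 \<le> t" "t \<le> length xs"
  shows "simple_sum (take t xs) (xs ! 0) = 1"
proof -
  have "xs ! 0 \<in> set (take t xs)"
    using assms by (metis One_nat_def Suc_le_eq in_set_conv_nth length_take min.absorb2 nth_take)
  then show ?thesis using simple_sum_distinct[OF is_path_distinct[OF is_path_take[OF p]]] by simp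
qed

lemma B_simple_sr: "a < r \<Longrightarrow> B (simple a) (sr a y) = - B (simple a) y"
  using W_B[OF sr_in_W, of a "simple a" "sr a y"] sr_simple sr_sr B_uminus_left by simp

text \<open>For \<open>k < l\<close>, writing the path as \<open>p @ a # m @ [b] @ \<dots>\<close>, the two partial sums are
  \<open>wd p \<alpha>\<^sub>a\<close> and \<open>wd p (\<sigma>\<^sub>a (\<alpha>\<^sub>m\<^sub>1 + \<dots> + \<alpha>\<^sub>b))\<close>, and only the first letter after \<open>a\<close> is adjacent
  to \<open>a\<close>.\<close>
lemma B_path_prefix_sums:
  assumes p: "is_path xs" and kl: "k < l" "l < length xs"
  shows "B (simple_sum (take (Suc k) xs)) (simple_sum (take (Suc l) xs)) = 1"
proof -
  define pp a mid b where "pp = take k xs" and "a = xs ! k"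
    and "mid = drop (Suc k) (take l xs)" and "b = xs ! l"
  have a: "a < r" using is_path_lt[OF p] kl a_def by simp
  have tk: "take (Suc k) xs = pp @ [a]"
    using kl unfolding pp_def a_def by (simp add: take_Suc_conv_app_nth)
  have "take l xs = take (Suc k) (take l xs) @ mid"
    unfolding mid_def by (rule append_take_drop_id[symmetric])
  also have "take (Suc k) (take l xs) = take (Suc k) xs" using kl by (simp add: min_def)
  finally have tl: "take (Suc l) xs = pp @ a # mid @ [b]"
    using kl tk unfolding b_def by (simp add: take_Suc_conv_app_nth)
  have pl: "is_path (take (Suc l) xs)" using is_path_take[OF p] .
  have pAM: "is_path (a # mid @ [b])" using is_path_drop[OF pl, of k] tl pp_def kl by (simp add: min_def)
  have pMB: "is_path (mid @ [b])" using is_path_drop[OF pAM, of 1] by simp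
  have WW: "wd pp \<in> W" using wd_in_W is_path_set[OF is_path_take[OF p]] pp_def by blast
  have "simple_sum (take (Suc k) xs) = wd pp (simple a)"
    using wd_path_simple is_path_take[OF p, of "Suc k"] tk by simp
  moreover have "simple_sum (take (Suc l) xs) = wd pp (sr a (wd mid (simple b)))"
    using wd_path_simple[of "pp @ a # mid" b] pl tl by (simp add: wd_append wd_Cons)
  ultimately have "B (simple_sum (take (Suc k) xs)) (simple_sum (take (Suc l) xs))
      = - B (simple a) (simple_sum (mid @ [b]))"
    using W_B[OF WW] B_simple_sr[OF a] wd_path_simple[OF pMB] by simp
  also have "\<dots> = - (\<Sum>y\<leftarrow>mid @ [b]. A y a)"
    using B_simple_sum_simple[OF is_path_set[OF pMB] a] B_sym by simp
  also have "\<dots> = 1" using is_path_sum_A_head[OF pAM] by simp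
  finally show ?thesis .
qed

lemma path_N_first_coord:
  assumes "is_path xs" and "\<beta> \<in> N (wd xs)"
  shows "\<beta> (xs ! 0) = 1"
proof -
  obtain t where "t \<in> {1..length xs}" "\<beta> = simple_sum (take t xs)"
    using assms path_N by blast
  then show ?thesis using path_prefix_sum_first_coord[OF assms(1)] by simp
qed

lemma path_N_B:
  assumes p: "is_path xs" and "\<beta> \<in> N (wd xs)" "\<gamma> \<in> N (wd xs)" "\<beta> \<noteq> \<gamma>"
  shows "B \<beta> \<gamma> = 1"
proof -
  obtain t t' where t: "t \<in> {1..length xs}" "\<beta> = simple_sum (take t xs)"
    and t': "t' \<in> {1..length xs}" "\<gamma> = simple_sum (take t' xs)"
    using assms path_N[OF p] by blast
  obtain k l where "t = Suc k" "t' = Suc l" using t(1) t'(1) by (cases t; cases t') auto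
  then have kl: "k < length xs" "l < length xs" "k \<noteq> l"
    "\<beta> = simple_sum (take (Suc k) xs)" "\<gamma> = simple_sum (take (Suc l) xs)"
    using t t' assms(4) by auto
  then consider "k < l" | "l < k" by linarith
  then show ?thesis
  proof cases
    case 1
    then show ?thesis using B_path_prefix_sums[OF p 1] kl by simp
  next
    case 2
    then show ?thesis using B_path_prefix_sums[OF p 2] kl B_sym[of \<beta>] by simp
  qed
qed

lemma sr_comp_sr_orth_apply:
  assumes "a < r" "b < r" "A b a = 0"
  shows "sr a (sr b v) = (\<lambda>j. v j - B v (simple b) * simple b j - B v (simple a) * simple a j)"
proof -
  have "B (\<lambda>j. v j - B v (simple b) * simple b j) (simple a) = B v (simple a)"
    using B_simple[OF assms(2,1)] assms(3) by (simp only: B_diff_left B_smult_left)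
  then show ?thesis by (simp add: refl_def)
qed

lemma sr_commute:
  assumes a: "a < r" and b: "b < r" and ab: "A a b = 0"
  shows "sr a \<circ> sr b = sr b \<circ> sr a"
proof -
  have "sr a (sr b v) = sr b (sr a v)" for v
    using ab A_sym[OF a b]
    by (simp only: sr_comp_sr_orth_apply[OF a b] sr_comp_sr_orth_apply[OF b a])
       (auto simp: fun_eq_iff algebra_simps)
  then show ?thesis by (simp add: fun_eq_iff)
qed

lemma sr_commute_wd:
  "b < r \<Longrightarrow> \<forall>y\<in>set p. y < r \<and> A y b = 0 \<Longrightarrow> sr b \<circ> wd p = wd p \<circ> sr b"
proof (induction p)
  case Nil
  then show ?case by (simp add: wd_Nil)
next
  case (Cons y p)
  have IH: "sr b \<circ> wd p = wd p \<circ> sr b" by (rule Cons.IH) (use Cons.prems in auto)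
  have "sr b \<circ> sr y = sr y \<circ> sr b" using Cons.prems sr_commute A_sym by simp
  then have "sr b \<circ> wd (y # p) = sr y \<circ> (sr b \<circ> wd p)" by (simp add: wd_Cons comp_assoc flip: comp_assoc)
  also have "\<dots> = wd (y # p) \<circ> sr b" using IH by (simp add: wd_Cons comp_assoc)
  finally show ?case .
qed

lemma sr_braid: "a < r \<Longrightarrow> b < r \<Longrightarrow> A a b = -1 \<Longrightarrow> sr a \<circ> sr b \<circ> sr a = sr b \<circ> sr a \<circ> sr b"
proof -
  assume a: "a < r" and b: "b < r" and ab: "A a b = -1"
  have conj: "sr x \<circ> sr y \<circ> sr x = refl r A (sr x (simple y))" if x: "x < r" for x y
    using W_refl_conj[OF sr_in_W[OF x], of "simple y"] sr_comp_sr[OF x]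
    by (metis comp_assoc comp_id)
  have "sr a (simple b) = sr b (simple a)"
    using B_simple[OF b a] B_simple[OF a b] ab A_sym[OF a b] by (simp add: refl_def fun_eq_iff)
  then show ?thesis using conj[OF a] conj[OF b] by simp
qed

lemma refl_prefix_deletes_letter:
  assumes "set (p @ c # q) \<subseteq> {..<r}"
  shows "refl r A (wd p (simple c)) \<circ> wd (p @ c # q) = wd (p @ q)"
proof -
  have c: "c < r" using assms by simp
  have "refl r A (wd p (simple c)) \<circ> wd (p @ c # q) = (refl r A (wd p (simple c)) \<circ> wd p) \<circ> sr c \<circ> wd q"
    by (simp add: wd_append wd_Cons comp_assoc)
  also have "\<dots> = wd p \<circ> (sr c \<circ> sr c) \<circ> wd q"
    using W_refl_conj wd_in_W assms by (simp add: comp_assoc)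
  finally show ?thesis using sr_comp_sr[OF c] by (simp add: wd_append)
qed

text \<open>Removing the \<open>t\<close>-th letter \<open>c\<close> from a path lets the following letter \<open>b\<close>, which commutes with
  everything before \<open>c\<close>, move to the front; so \<open>\<sigma>\<^sub>b\<close> becomes a left descent, and \<open>b \<noteq> i\<close>.\<close>
lemma Dpow_refl_path_vanishes:
  assumes p: "is_path ps" and i: "ps ! 0 = i" and t: "Suc t < length ps"
  shows "Dpow i (length ps - 1) (refl r A (simple_sum (take (Suc t) ps)) \<circ> wd ps) = 0"
proof (rule ccontr)
  define pp c b q where "pp = take t ps" and "c = ps ! t" and "b = ps ! Suc t"
    and "q = drop (Suc (Suc t)) ps"
  define x where "x = refl r A (simple_sum (take (Suc t) ps)) \<circ> wd ps"
  assume "Dpow i (length ps - 1) (refl r A (simple_sum (take (Suc t) ps)) \<circ> wd ps) \<noteq> 0"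
  then have x: "Dpow i (length ps - 1) x > 0" using Dpow_nonneg x_def by (metis less_le)
  then have xW: "x \<in> W" and lx: "len x = length ps - 1"
    using Dpow_nonzero_imp[of i "length ps - 1" x] by auto
  have "drop t ps = c # b # q"
    using t unfolding c_def b_def q_def by (simp add: Cons_nth_drop_Suc)
  then have ps: "ps = pp @ c # b # q" unfolding pp_def by (metis append_take_drop_id)
  have set: "set ps \<subseteq> {..<r}" using is_path_set[OF p] .
  then have b: "b < r" and ppq: "set (pp @ q) \<subseteq> {..<r}" by (auto simp: ps)
  have "simple_sum (take (Suc t) ps) = wd pp (simple c)"
    using wd_path_simple[of pp c] is_path_take[OF p, of "Suc t"] t
    by (simp add: pp_def c_def take_Suc_conv_app_nth)
  then have x_wd: "x = wd (pp @ b # q)"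
    using refl_prefix_deletes_letter[of pp c "b # q"] set ps x_def by simp
  have "\<forall>y\<in>set pp. y < r \<and> A y b = 0"
  proof
    fix y assume "y \<in> set pp"
    then obtain s where s: "s < t" "y = ps ! s" unfolding pp_def by (auto simp: in_set_conv_nth)
    then show "y < r \<and> A y b = 0" using is_path_far[OF p, of s "Suc t"] is_path_lt[OF p] t b_def by simp
  qed
  then have "sr b \<circ> x = wd pp \<circ> (sr b \<circ> sr b) \<circ> wd q"
    using x_wd sr_commute_wd[OF b] by (simp add: wd_append wd_Cons comp_assoc flip: comp_assoc)
  then have "sr b \<circ> x = wd (pp @ q)" using sr_comp_sr[OF b] by (simp add: wd_append)
  then have "len (sr b \<circ> x) < len x"
    using len_le_length[OF ppq] lx by (simp add: ps)
  then have "simple b \<in> N x" using left_descent_iff[OF xW b] by blast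
  moreover have "b \<noteq> i"
    using nth_eq_iff_index_eq[OF is_path_distinct[OF p], of "Suc t" 0] t i unfolding b_def
    by (metis nat.distinct(1) zero_less_Suc order.strict_trans)
  ultimately show False
    using only_left_descent_if_Dpow_pos[OF x] b unfolding only_left_descent_def by blast
qed

lemma Dpow_path:
  "is_path ps \<Longrightarrow> (ps \<noteq> [] \<longrightarrow> ps ! 0 = i) \<Longrightarrow> Dpow i (length ps) (wd ps) = 1"
proof (induction ps rule: rev_induct)
  case Nil
  then show ?case by (simp add: Dpow_0 wd_Nil id_def)
next
  case (snoc a qs)
  define ps where "ps = qs @ [a]"
  have p: "is_path ps" and i: "ps ! 0 = i" using snoc.prems ps_def by auto
  have pq: "is_path qs" using is_path_take[OF p, of "length qs"] ps_def by simp
  have IH: "Dpow i (length qs) (wd qs) = 1"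
    using snoc.IH pq i ps_def by (auto simp: nth_append)
  have u: "wd ps \<in> W" and a: "a < r" using wd_in_W is_path_set[OF p] ps_def by auto
  have "simple_sum ps = wd qs (simple a)" using wd_path_simple p ps_def by simp
  then have \<beta>0: "refl r A (simple_sum ps) \<circ> wd ps = wd qs"
    using refl_prefix_deletes_letter[of qs a "[]"] is_path_set[OF p] ps_def by simp
  then have \<beta>0_cr: "simple_sum ps \<in> chevalley_roots (wd ps)"
    using path_simple_sum_pos[OF p] path_len[OF p] path_len[OF pq] ps_def
    unfolding chevalley_roots_def by simp
  have others: "Dpow i (length qs) (refl r A \<beta> \<circ> wd ps) = 0"
    if "\<beta> \<in> chevalley_roots (wd ps) - {simple_sum ps}" for \<beta>
  proof -
    have "\<beta> \<in> N (wd ps)" using that chevalley_roots_subset_N[OF u] by blast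
    then obtain t where t: "t \<in> {1..length ps}" "\<beta> = simple_sum (take t ps)"
      using path_N[OF p] by blast
    then have "t \<noteq> length ps" using that by auto
    then obtain t' where "t = Suc t'" "Suc t' < length ps" using t(1) by (cases t) auto
    then show ?thesis
      using Dpow_refl_path_vanishes[OF p i] \<open>\<beta> = simple_sum (take t ps)\<close> ps_def by simp
  qed
  have lps: "length ps = Suc (length qs)" using ps_def by simp
  have "Dpow i (length ps) (wd ps)
      = (\<Sum>\<beta>\<in>chevalley_roots (wd ps). \<beta> i * Dpow i (length qs) (refl r A \<beta> \<circ> wd ps))"
    using u lps by (simp add: Dpow_Suc)
  also have "\<dots> = simple_sum ps i * Dpow i (length qs) (refl r A (simple_sum ps) \<circ> wd ps)
        + (\<Sum>\<beta>\<in>chevalley_roots (wd ps) - {simple_sum ps}. \<beta> i * Dpow i (length qs) (refl r A \<beta> \<circ> wd ps))"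
    by (rule sum.remove[OF chevalley_roots_finite[OF u] \<beta>0_cr])
  also have "\<dots> = 1"
    using \<beta>0 IH others path_prefix_sum_first_coord[OF p, of "length ps"] i lps by simp
  finally show ?case using ps_def by simp
qed

section \<open>Path elements\<close>

text \<open>A vertex outside a path adjacent to two of its vertices would close a cycle in the Dynkin
  diagram: the sum of \<open>\<alpha>\<^sub>j\<close> and the roots along the path between the two neighbours has square
  length \<open>\<le> 0\<close>.\<close>
lemma path_no_cycle:
  assumes p: "is_path xs" and t: "t + 1 < length xs" and j: "j < r" and jn: "j \<notin> set xs"
    and At: "A (xs ! t) j = -1" and Al: "A (last xs) j = -1"
  shows False
proof -
  define ds where "ds = drop t xs"
  have pd: "is_path ds" and dsr: "set ds \<subseteq> {..<r}" and ds_sub: "set ds \<subseteq> set xs"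
    using is_path_drop[OF p] is_path_set ds_def by (auto simp: set_drop_subset)
  have ds0: "ds = xs ! t # drop (Suc t) xs" using t ds_def by (simp add: Cons_nth_drop_Suc)
  have "drop (Suc t) xs \<noteq> []" "last (drop (Suc t) xs) = last xs" using t by auto
  then obtain mid where dsd: "ds = xs ! t # mid @ [last xs]"
    using ds0 by (metis append_butlast_last_id)
  have "A y j \<le> 0" if "y \<in> set mid" for y
  proof -
    have "y \<in> set ds" using that dsd by simp
    then have "y \<noteq> j" "y < r" using jn ds_sub dsr by auto
    then show ?thesis using A_off_diag_nonpos j by blast
  qed
  then have mid: "(\<Sum>y\<leftarrow>mid. A y j) \<le> 0" by (intro sum_list_nonpos) auto
  have "B (simple_sum ds) (simple j) = A (xs ! t) j + (\<Sum>y\<leftarrow>mid. A y j) + A (last xs) j"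
    using B_simple_sum_simple[OF dsr j] dsd by simp
  then have gj: "B (simple_sum ds) (simple j) \<le> -2" using At Al mid by simp
  have gg: "B (simple_sum ds) (simple_sum ds) = 2"
    using path_simple_sum_pos[OF pd] dsd root_B_self pos_root by simp
  define x where "x = (\<lambda>k. simple_sum ds k + simple j k)"
  have "B x x = B (simple_sum ds) (simple_sum ds) + 2 * B (simple_sum ds) (simple j)
      + B (simple j) (simple j)"
    unfolding x_def by (simp add: B_add_left B_add_right B_sym[of "simple j" "simple_sum ds"])
  then have "B x x \<le> 0" using gg gj B_simple_self[OF j] by simp
  moreover have "Q x" using simple_sum_in_lattice[OF dsr] simple_in_lattice[OF j]
    unfolding x_def in_lattice_def by simp
  moreover have "x j = 1"
    using simple_sum_notin[of j ds] jn ds_sub unfolding x_def by (auto simp: simple_def)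
  then have "x \<noteq> (\<lambda>_. 0)" by (metis one_neq_zero)
  ultimately show False using B_pos_def[of x] by simp
qed

lemma path_last_adjacent:
  assumes p: "is_path (pp @ [a])" and j: "j < r"
    and lw: "len (wd (pp @ [a]) \<circ> sr j) = length pp + 2"
    and desc: "\<And>t. t < r \<Longrightarrow> len (wd (pp @ [a]) \<circ> sr j \<circ> sr t) < len (wd (pp @ [a]) \<circ> sr j) \<Longrightarrow> t = j"
  shows "j \<noteq> a" and "A a j = -1"
proof -
  have a: "a < r" and ppr: "set pp \<subseteq> {..<r}" using is_path_set[OF p] by auto
  have w: "wd (pp @ [a]) \<circ> sr j = wd pp \<circ> sr a \<circ> sr j" by (simp add: wd_snoc)
  show ja: "j \<noteq> a"
  proof
    assume "j = a"
    then have "wd (pp @ [a]) \<circ> sr j = wd pp" using w sr_comp_sr[OF a] by (simp add: comp_assoc)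
    then show False using len_le_length[OF ppr] lw by simp
  qed
  show "A a j = -1"
  proof (rule ccontr)
    assume "A a j \<noteq> -1"
    then have "A a j = 0" using A_off_diag[OF a j] ja by auto
    then have "wd (pp @ [a]) \<circ> sr j \<circ> sr a = wd pp \<circ> sr j \<circ> (sr a \<circ> sr a)"
      using w sr_commute[OF a j] by (simp add: comp_assoc)
    also have "\<dots> = wd (pp @ [j])" using sr_comp_sr[OF a] by (simp add: wd_snoc)
    finally have "len (wd (pp @ [a]) \<circ> sr j \<circ> sr a) < len (wd (pp @ [a]) \<circ> sr j)"
      using len_le_length[of "pp @ [j]"] ppr j lw by simp
    then show False using desc[OF a] ja by simp
  qed
qed

text \<open>If \<open>j\<close> already occurred on the path, it would be the second-to-last letter, and the braid
  relation would exhibit \<open>\<sigma>\<^sub>a\<close> as a second right descent.\<close>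
lemma path_extension_letter_new:
  assumes p: "is_path (pp @ [a])" and j: "j < r" and ja: "j \<noteq> a" and Aaj: "A a j = -1"
    and lw: "len (wd (pp @ [a]) \<circ> sr j) = length pp + 2"
    and desc: "\<And>t. t < r \<Longrightarrow> len (wd (pp @ [a]) \<circ> sr j \<circ> sr t) < len (wd (pp @ [a]) \<circ> sr j) \<Longrightarrow> t = j"
  shows "j \<notin> set (pp @ [a])"
proof
  assume "j \<in> set (pp @ [a])"
  then obtain k where k: "k < length pp" "pp ! k = j" using ja by (auto simp: in_set_conv_nth)
  have a: "a < r" and ppr: "set pp \<subseteq> {..<r}" using is_path_set[OF p] by auto
  have "\<not> length pp > k + 1"
  proof
    assume "length pp > k + 1"
    then have "A ((pp @ [a]) ! k) ((pp @ [a]) ! length pp) = 0"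
      using is_path_far[OF p, of k "length pp"] k by simp
    then show False using k Aaj A_sym[OF j a] by (simp add: nth_append)
  qed
  then have "k = length pp - 1" "pp \<noteq> []" using k by auto
  then have "last pp = j" using k by (simp add: last_conv_nth)
  then obtain pp' where pp': "pp = pp' @ [j]" using \<open>pp \<noteq> []\<close> by (metis append_butlast_last_id)
  have "wd (pp @ [a]) \<circ> sr j = wd pp' \<circ> (sr j \<circ> sr a \<circ> sr j)"
    using pp' by (simp add: wd_append wd_Cons wd_Nil comp_assoc)
  also have "\<dots> = wd pp' \<circ> (sr a \<circ> sr j \<circ> sr a)" using sr_braid[OF j a] Aaj A_sym[OF j a] by simp
  finally have "wd (pp @ [a]) \<circ> sr j \<circ> sr a = wd (pp' @ [a, j])"
    using sr_comp_sr[OF a] by (simp add: wd_append wd_Cons wd_Nil comp_assoc)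
  then have "len (wd (pp @ [a]) \<circ> sr j \<circ> sr a) < len (wd (pp @ [a]) \<circ> sr j)"
    using len_le_length[of "pp' @ [a, j]"] ppr pp' a j lw by simp
  then show False using desc[OF a] ja by simp
qed

definition path_elem :: "nat \<Rightarrow> weyl \<Rightarrow> bool" where
  "path_elem i w \<longleftrightarrow> (\<exists>xs. is_path xs \<and> (xs \<noteq> [] \<longrightarrow> xs ! 0 = i) \<and> w = wd xs)"

lemma path_elem_id: "path_elem i id"
  unfolding path_elem_def is_path_def using wd_Nil by (intro exI[of _ "[]"]) auto

lemma path_extend:
  assumes p: "is_path xs" and i: "xs \<noteq> [] \<longrightarrow> xs ! 0 = i" and j: "j < r"
    and up: "wd xs (simple j) \<in> pos"
    and only: "only_left_descent i (wd xs \<circ> sr j)"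
    and unique: "\<forall>t<r. (wd xs \<circ> sr j) (simple t) \<in> neg \<longrightarrow> t = j"
  shows "is_path (xs @ [j]) \<and> (xs @ [j]) ! 0 = i"
proof (cases xs rule: rev_cases)
  case Nil
  then have "N (wd xs \<circ> sr j) = {simple j}"
    using N_comp_sr_up(1)[OF id_in_W j] N_id simple_pos[OF j] by (simp add: wd_Nil)
  then have "j = i" using only j unfolding only_left_descent_def by blast
  then show ?thesis using Nil j unfolding is_path_def by simp
next
  case (snoc pp a)
  have v: "wd xs \<in> W" using wd_in_W is_path_set[OF p] by blast
  have wW: "wd xs \<circ> sr j \<in> W" using W_comp[OF v sr_in_W[OF j]] .
  have lw: "len (wd (pp @ [a]) \<circ> sr j) = length pp + 2"
    using len_comp_sr_up[OF v j up] path_len[OF p] snoc by simp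
  have desc: "t = j" if "t < r" "len (wd (pp @ [a]) \<circ> sr j \<circ> sr t) < len (wd (pp @ [a]) \<circ> sr j)" for t
    using unique right_descent_iff[OF wW] that snoc by blast
  have pa: "is_path (pp @ [a])" using p snoc by simp
  note adj = path_last_adjacent[OF pa j lw desc]
  have new: "j \<notin> set xs" using path_extension_letter_new[OF pa j adj lw desc] snoc by simp
  have "A (xs ! t) j = 0" if t: "t + 1 < length xs" for t
  proof (rule ccontr)
    assume "A (xs ! t) j \<noteq> 0"
    moreover have "xs ! t < r" "xs ! t \<noteq> j" using is_path_lt[OF p] new t by (auto simp: in_set_conv_nth)
    ultimately have "A (xs ! t) j = -1" using A_off_diag j by blast
    then show False using path_no_cycle[OF p t j new] adj(2) snoc by simp
  qed
  then have "is_path (xs @ [j])" using is_path_snoc[OF p j] adj(2) snoc by simp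
  moreover have "xs \<noteq> []" using snoc by simp
  then have "(xs @ [j]) ! 0 = i" using i by (simp add: nth_append)
  ultimately show ?thesis by blast
qed

lemma path_elem_snoc:
  assumes u: "u \<in> W" and j: "j < r" "u (simple j) \<in> neg" and "path_elem i (u \<circ> sr j)"
    and "only_left_descent i u" and unique: "\<forall>t<r. u (simple t) \<in> neg \<longrightarrow> t = j"
  shows "path_elem i u"
proof -
  obtain xs where xs: "is_path xs" "xs \<noteq> [] \<longrightarrow> xs ! 0 = i" "u \<circ> sr j = wd xs"
    using assms(4) unfolding path_elem_def by blast
  have uxs: "u = wd xs \<circ> sr j" using xs(3) sr_comp_sr[OF j(1)] by (metis comp_assoc comp_id)
  have "wd xs (simple j) = - u (simple j)"
    using xs(3) sr_simple[OF j(1)] W_uminus[OF u] by (metis comp_apply)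
  then have "wd xs (simple j) \<in> pos" using j(2) neg_iff by simp
  then have "is_path (xs @ [j]) \<and> (xs @ [j]) ! 0 = i"
    using path_extend[OF xs(1,2) j(1)] assms(5) unique uxs by simp
  then show ?thesis unfolding path_elem_def using uxs wd_snoc by (intro exI[of _ "xs @ [j]"]) auto
qed

lemma only_left_descent_if_inversions_involve: "inversions_involve i u \<Longrightarrow> only_left_descent i u"
  unfolding inversions_involve_def only_left_descent_def by (auto simp: simple_def)

lemma right_descents_inversions_B:
  assumes u: "u \<in> W" and t: "t < r" "u (simple t) \<in> neg" and j: "j < r" "u (simple j) \<in> neg"
  shows "- u (simple t) \<in> N u" "- u (simple j) \<in> N u" "B (- u (simple t)) (- u (simple j)) = A t j"
  using N_comp_sr_down(2)[OF u t] N_comp_sr_down(2)[OF u j] W_B[OF u] B_simple[OF t(1) j(1)]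
  by (simp_all add: B_uminus_left B_uminus_right)

text \<open>Peel off a right descent; two distinct right descents \<open>t, j\<close> would give inversions
  \<open>-u \<alpha>\<^sub>t, -u \<alpha>\<^sub>j\<close> whose scalar product \<open>A t j\<close> is \<open>0\<close> or \<open>-1\<close>.\<close>
lemma path_elem_if_inversions_pairwise:
  "u \<in> W \<Longrightarrow> inversions_involve i u \<Longrightarrow>
   (\<forall>\<beta>\<in>N u. \<forall>\<gamma>\<in>N u. \<beta> \<noteq> \<gamma> \<longrightarrow> B \<beta> \<gamma> \<noteq> 0 \<and> B \<beta> \<gamma> \<noteq> -1) \<Longrightarrow> path_elem i u"
proof (induction "len u" arbitrary: u)
  case 0
  then show ?case using len_eq_0_imp_id path_elem_id by metis
next
  case (Suc n)
  obtain j where j: "j < r" "u (simple j) \<in> neg"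
    using right_descent_exists[OF Suc.prems(1)] Suc.hyps(2) by auto
  have "len (u \<circ> sr j) = n" "N (u \<circ> sr j) \<subseteq> N u"
    using len_comp_sr_down[OF Suc.prems(1) j] N_comp_sr_down(1)[OF Suc.prems(1) j] Suc.hyps(2) by auto
  then have "path_elem i (u \<circ> sr j)"
    using Suc W_comp[OF Suc.prems(1) sr_in_W[OF j(1)]] unfolding inversions_involve_def by blast
  moreover have "t = j" if t: "t < r" "u (simple t) \<in> neg" for t
  proof (rule ccontr)
    assume tj: "t \<noteq> j"
    then have "- u (simple t) \<noteq> - u (simple j)"
      using W_inj[OF Suc.prems(1)] simple_inj by (metis vec_uminus_uminus)
    then show False
      using right_descents_inversions_B[OF Suc.prems(1) t j] A_off_diag[OF t(1) j(1) tj] Suc.prems(3)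
      by metis
  qed
  ultimately show ?case
    using path_elem_snoc[OF Suc.prems(1) j] only_left_descent_if_inversions_involve Suc.prems(2) by blast
qed

text \<open>Each right descent \<open>t\<close> of \<open>u\<close> contributes a positive integer term to the Chevalley sum
  for \<open>Dpow i (len u) u = 1\<close>; so there is only one right descent, and its term is \<open>1\<close>.\<close>
lemma path_elem_if_Dpow_eq_1:
  "u \<in> W \<Longrightarrow> Dpow i (len u) u = 1 \<Longrightarrow> path_elem i u"
proof (induction "len u" arbitrary: u)
  case 0
  then show ?case using len_eq_0_imp_id path_elem_id by metis
next
  case (Suc n)
  note u = Suc.prems(1)
  have only: "only_left_descent i u" using only_left_descent_if_Dpow_pos[of i "len u" u] Suc.prems(2) by simp
  then have inv: "inversions_involve i u" using inversions_involve_if_only_left_descent u by blast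
  define \<gamma> where "\<gamma> t = - u (simple t)" for t
  have contrib: "\<gamma> t \<in> chevalley_roots u" "refl r A (\<gamma> t) \<circ> u = u \<circ> sr t"
    "\<gamma> t i * Dpow i n (u \<circ> sr t) > 0"
    if t: "t < r" "u (simple t) \<in> neg" for t
    using right_descent_chevalley_root[OF u t] right_descent_Dpow_term_pos[OF u inv t]
      Suc.hyps(2)[symmetric] unfolding \<gamma>_def by (auto simp: mult_neg_pos)
  obtain j where j: "j < r" "u (simple j) \<in> neg"
    using right_descent_exists[OF u] Suc.hyps(2) by auto
  have unique: "t = j" if t: "t < r" "u (simple t) \<in> neg" for t
  proof (rule ccontr)
    assume "t \<noteq> j"
    then have "\<gamma> t \<noteq> \<gamma> j" using W_inj[OF u] simple_inj \<gamma>_def by (metis vec_uminus_uminus)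
    then have "(\<Sum>\<beta>\<in>{\<gamma> t, \<gamma> j}. \<beta> i * Dpow i n (refl r A \<beta> \<circ> u))
        = \<gamma> t i * Dpow i n (u \<circ> sr t) + \<gamma> j i * Dpow i n (u \<circ> sr j)"
      using contrib(2)[OF t] contrib(2)[OF j] by simp
    then have "(\<Sum>\<beta>\<in>{\<gamma> t, \<gamma> j}. \<beta> i * Dpow i n (refl r A \<beta> \<circ> u)) \<ge> 2"
      using contrib(3)[OF t] contrib(3)[OF j] by linarith
    then show False
      using Dpow_Suc_ge_partial_sum[OF u, of "{\<gamma> t, \<gamma> j}" i n] contrib(1)[OF t] contrib(1)[OF j] Suc
      by simp
  qed
  have "\<gamma> j i * Dpow i n (u \<circ> sr j) \<le> 1"
    using Dpow_Suc_ge_partial_sum[OF u, of "{\<gamma> j}" i n] contrib(1,2)[OF j] Suc by simp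
  moreover have "\<gamma> j i > 0" "Dpow i n (u \<circ> sr j) > 0"
    using contrib(3)[OF j] Dpow_nonneg[of i n "u \<circ> sr j"] by (auto simp: zero_less_mult_iff)
  moreover from this have "Dpow i n (u \<circ> sr j) \<le> \<gamma> j i * Dpow i n (u \<circ> sr j)" by simp
  ultimately have "Dpow i n (u \<circ> sr j) = 1" by linarith
  moreover have "len (u \<circ> sr j) = n" using len_comp_sr_down[OF u j] Suc.hyps(2) by simp
  ultimately have "path_elem i (u \<circ> sr j)"
    using Suc.hyps(1) W_comp[OF u sr_in_W[OF j(1)]] by metis
  then show ?case using path_elem_snoc[OF u j _ only] unique by blast
qed

lemma Dpow_len_eq_1_iff_path_elem: "u \<in> W \<Longrightarrow> Dpow i (len u) u = 1 \<longleftrightarrow> path_elem i u"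
  using path_elem_if_Dpow_eq_1 Dpow_path path_len unfolding path_elem_def by metis

section \<open>Clusters and path-originating sequences\<close>

text \<open>The \<open>k\<close>-th partial sum is the unique inversion of height \<open>k\<close>.\<close>
lemma partial_sums_eq_if_N_eq:
  assumes p: "is_path xs" and p': "is_path xs'" and l: "length xs = length xs'"
    and N: "N (wd xs) = N (wd xs')"
  shows "partial_sums xs = partial_sums xs'"
proof (rule nth_equalityI)
  show "length (partial_sums xs) = length (partial_sums xs')" using l partial_sums_length by simp
next
  fix k assume "k < length (partial_sums xs)"
  then have k: "k \<le> length xs" using partial_sums_length by simp
  show "partial_sums xs ! k = partial_sums xs' ! k"
  proof (cases "k = 0")
    case True
    then show ?thesis using partial_sums_nth[of 0] by simp
  next
    case False
    then have "simple_sum (take k xs) \<in> N (wd xs)" unfolding path_N[OF p] using k by auto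
    then have "simple_sum (take k xs) \<in> N (wd xs')" using N by simp
    then obtain t where t: "t \<in> {1..length xs'}" "simple_sum (take k xs) = simple_sum (take t xs')"
      using path_N[OF p'] by auto
    have "int k = int t"
      using simple_sum_height[OF is_path_set[OF is_path_take[OF p]], of k]
        simple_sum_height[OF is_path_set[OF is_path_take[OF p']], of t] k t by simp
    then show ?thesis using partial_sums_nth k l t by simp
  qed
qed

lemma sum_single_tuple: "i < r \<Longrightarrow> (\<Sum>j<r. (if j = i then n else 0)) = (n::nat)"
  by simp

lemma supp_single_tuple: "i < r \<Longrightarrow> supp_tuple r (\<lambda>j. if j = i then n else 0) = (if n = 0 then {} else {i})"
  unfolding supp_tuple_def by auto

lemma R_set_N_eq_if_card:
  assumes u: "u \<in> W" and "card (R_set {i} (N u)) = len u"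
  shows "R_set {i} (N u) = N u"
proof (rule card_subset_eq[OF N_finite[OF u]])
  show "R_set {i} (N u) \<subseteq> N u" unfolding R_set_def by blast
  show "card (R_set {i} (N u)) = card (N u)" using assms(2) len_card_N[OF u] by simp
qed

lemma R_set_single_eq_iff: "R_set {i} S = S \<longleftrightarrow> (\<forall>\<beta>\<in>S. \<beta> i \<noteq> 0)"
  unfolding R_set_def supp_def by auto

lemma inversions_involve_iff_R_set: "inversions_involve i u \<longleftrightarrow> R_set {i} (N u) = N u"
proof -
  have "\<beta> i > 0 \<longleftrightarrow> \<beta> i \<noteq> 0" if "\<beta> \<in> N u" for \<beta>
    using that N_subset_pos pos_iff[of \<beta>] by (auto simp: order_less_le)
  then show ?thesis unfolding inversions_involve_def R_set_single_eq_iff by simp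
qed

text \<open>Distinct inversions have scalar product \<open>1\<close>, and one has \<open>B \<beta> \<beta> = 2\<close>, so \<open>B\<close> never
  vanishes on the inversion set.\<close>
lemma path_N_is_cluster:
  assumes p: "is_path xs" and "xs \<noteq> []"
  shows "is_cluster r A {xs ! 0} (N (wd xs))"
  unfolding is_cluster_def
proof (intro conjI ballI impI)
  fix \<alpha> j assume "\<alpha> \<in> N (wd xs)" "j \<in> {xs ! 0}"
  then show "\<alpha> j \<le> 1" using path_N_first_coord[OF p, of \<alpha>] by simp
next
  fix \<alpha> \<beta> assume "\<alpha> \<in> N (wd xs)" "\<beta> \<in> N (wd xs)" "\<alpha> \<noteq> \<beta>"
  then show "B \<alpha> \<beta> \<noteq> -1" using path_N_B[OF p] by simp
next
  fix \<alpha> \<beta> assume "\<alpha> \<in> N (wd xs)" "\<beta> \<in> N (wd xs)" "B \<alpha> \<beta> = 0"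
  moreover have "B \<alpha> \<alpha> = 2" if "\<alpha> \<in> N (wd xs)" for \<alpha>
    using that N_subset_pos root_B_self pos_root by blast
  ultimately show "supp \<alpha> \<inter> supp \<beta> \<inter> {xs ! 0} = {}"
    using path_N_B[OF p] by (cases "\<alpha> = \<beta>") auto
qed

lemma excessive_cluster_if_path_elem:
  assumes i: "i < r" and "path_elem i u"
  shows "excessive_cluster r A (N u) (\<lambda>j. if j = i then len u else 0)"
proof -
  obtain xs where p: "is_path xs" and i0: "xs \<noteq> [] \<longrightarrow> xs ! 0 = i" and u: "u = wd xs"
    using assms(2) unfolding path_elem_def by blast
  have uW: "u \<in> W" using u wd_in_W is_path_set[OF p] by blast
  show ?thesis
  proof (cases "xs = []")
    case True
    then have "N u = {}" "len u = 0" using u N_id len_id wd_Nil by simp_all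
    then show ?thesis
      unfolding excessive_cluster_def excessive_def is_cluster_def supp_tuple_def R_set_def by simp
  next
    case False
    have "len u \<noteq> 0" using False path_len[OF p] unfolding u by simp
    then have st: "supp_tuple r (\<lambda>j. if j = i then len u else 0) = {i}"
      using supp_single_tuple[OF i] by simp
    have "R_set {i} (N u) = N u"
      unfolding R_set_single_eq_iff u using path_N_first_coord[OF p] i0 False by fastforce
    then have "excessive r (N u) (\<lambda>j. if j = i then len u else 0)"
      unfolding excessive_def st using len_card_N[OF uW] sum_single_tuple[OF i] by auto
    moreover have "is_cluster r A {i} (N u)" using path_N_is_cluster[OF p False] i0 False u by simp
    ultimately show ?thesis unfolding excessive_cluster_def st by simp
  qed
qed

lemma path_elem_if_excessive_cluster:
  assumes u: "u \<in> W" and i: "i < r"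
    and ec: "excessive_cluster r A (N u) (\<lambda>j. if j = i then len u else 0)"
  shows "path_elem i u"
proof (cases "len u = 0")
  case True
  then show ?thesis using len_eq_0_imp_id u path_elem_id by metis
next
  case False
  then have st: "supp_tuple r (\<lambda>j. if j = i then len u else 0) = {i}"
    using supp_single_tuple[OF i] by simp
  then have "R_set {i} (N u) = N u"
    using ec R_set_N_eq_if_card[OF u] sum_single_tuple[OF i]
    unfolding excessive_cluster_def excessive_def by simp
  then have inv: "inversions_involve i u" using inversions_involve_iff_R_set by blast
  have cl: "is_cluster r A {i} (N u)" using ec st unfolding excessive_cluster_def by simp
  have "B \<beta> \<gamma> \<noteq> 0 \<and> B \<beta> \<gamma> \<noteq> -1" if \<beta>\<gamma>: "\<beta> \<in> N u" "\<gamma> \<in> N u" "\<beta> \<noteq> \<gamma>" for \<beta> \<gamma>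
  proof
    have "i \<in> supp \<beta> \<inter> supp \<gamma>" using inv \<beta>\<gamma> unfolding inversions_involve_def supp_def by auto
    then show "B \<beta> \<gamma> \<noteq> 0" using cl \<beta>\<gamma> unfolding is_cluster_def by blast
    show "B \<beta> \<gamma> \<noteq> -1" using cl \<beta>\<gamma> unfolding is_cluster_def by blast
  qed
  then show ?thesis using path_elem_if_inversions_pairwise[OF u inv] by blast
qed

lemma single_tuple_on_N:
  assumes u: "u \<in> W" and i: "i < r"
  defines "e \<equiv> \<lambda>j. if j = i then len u else 0"
  shows "(\<Sum>j<r. e j) = card (N u)"
    and "N u \<noteq> {} \<Longrightarrow> supp_tuple r e = {i}"
    and "card (R_set {i} (N u)) = (\<Sum>j<r. e j) \<Longrightarrow> R_set {i} (N u) = N u"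
proof -
  show sum_e: "(\<Sum>j<r. e j) = card (N u)" using sum_single_tuple[OF i] len_card_N[OF u] e_def by simp
  show "N u \<noteq> {} \<Longrightarrow> supp_tuple r e = {i}"
    using supp_single_tuple[OF i] len_card_N[OF u] N_finite[OF u] unfolding e_def by auto
  show "card (R_set {i} (N u)) = (\<Sum>j<r. e j) \<Longrightarrow> R_set {i} (N u) = N u"
    using R_set_N_eq_if_card[OF u] sum_e len_card_N[OF u] by simp
qed

lemma exc_clusterizable_if_excessive_cluster:
  assumes u: "u \<in> W" and i: "i < r"
  defines "e \<equiv> \<lambda>j. if j = i then len u else 0"
  assumes ec: "excessive_cluster r A (N u) e"
  shows "exc_clusterizable r A (N u) e"
proof (cases "N u = {}")
  case True
  then have "\<forall>j<r. e j = 0" using len_card_N[OF u] unfolding e_def by simp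
  then show ?thesis using True exc_clusterizable.empty by simp
next
  case False
  note st = single_tuple_on_N(2)[OF u i False, folded e_def]
  have card: "card (R_set {i} (N u)) = (\<Sum>j<r. e j)"
    using ec st unfolding excessive_cluster_def excessive_def by simp
  note R = single_tuple_on_N(3)[OF u i, folded e_def, OF card]
  show ?thesis
  proof (rule exc_clusterizable.step[where I="{i}" and k=e])
    show "N u \<noteq> {}" "{i} \<noteq> {}" by (fact False) simp
    show "{i} \<subseteq> supp_tuple r e" using st by simp
    show "e = (\<lambda>j. if j \<in> {i} then e j else 0)" unfolding e_def by auto
    show "card (R_set {i} (N u)) = (\<Sum>j<r. e j)" by (fact card)
    show "excessive_cluster r A (R_set {i} (N u)) e" using ec R by simp
    have "\<forall>j<r. e j - e j = 0" by simp
    then show "exc_clusterizable r A (N u - R_set {i} (N u)) (\<lambda>j. e j - e j)"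
      using R exc_clusterizable.empty by simp
  qed
qed

lemma excessive_cluster_if_exc_clusterizable:
  assumes u: "u \<in> W" and i: "i < r"
  defines "e \<equiv> \<lambda>j. if j = i then len u else 0"
  assumes "exc_clusterizable r A (N u) e"
  shows "excessive_cluster r A (N u) e"
  using assms(4)
proof cases
  case empty
  then have "len u = 0" using len_card_N[OF u] by simp
  then have "path_elem i u" using len_eq_0_imp_id[OF u] path_elem_id by simp
  then show ?thesis using excessive_cluster_if_path_elem[OF i] unfolding e_def by blast
next
  case (step I k)
  then have "I = {i}" using single_tuple_on_N(2)[OF u i, folded e_def] by auto
  moreover have "k = e" using step(4) calculation unfolding e_def by auto
  ultimately show ?thesis using step(5,6) single_tuple_on_N(3)[OF u i, folded e_def] by simp
qed

definition path_seq :: "nat \<Rightarrow> nat \<Rightarrow> vec list \<Rightarrow> bool" where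
  "path_seq i n bs \<longleftrightarrow> path_originating r A bs \<and> length bs = n + 1 \<and> (n > 0 \<longrightarrow> bs ! 1 = simple i)"

lemma path_seq_iff:
  "path_seq i n bs \<longleftrightarrow> (\<exists>xs. is_path xs \<and> length xs = n \<and> (xs \<noteq> [] \<longrightarrow> xs ! 0 = i) \<and> bs = partial_sums xs)"
proof -
  have "length (partial_sums xs) = n + 1 \<and> (n > 0 \<longrightarrow> partial_sums xs ! 1 = simple i)
      \<longleftrightarrow> length xs = n \<and> (xs \<noteq> [] \<longrightarrow> xs ! 0 = i)" for xs
    using partial_sums_length[of xs] partial_sums_1[of xs] simple_inj by auto
  then show ?thesis unfolding path_seq_def path_originating_iff by blast
qed

lemma path_seq_N_iff:
  assumes "u \<in> W" and i: "i < r"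
  shows "(\<exists>bs. path_seq i (len u) bs \<and> N u = {bs ! j | j. j \<in> {1..len u}}) \<longleftrightarrow> path_elem i u"
proof
  assume "\<exists>bs. path_seq i (len u) bs \<and> N u = {bs ! j | j. j \<in> {1..len u}}"
  then obtain xs where p: "is_path xs" "length xs = len u" "xs \<noteq> [] \<longrightarrow> xs ! 0 = i"
    and "N u = {partial_sums xs ! j | j. j \<in> {1..len u}}"
    unfolding path_seq_iff by blast
  then have NN: "N u = N (wd xs)" using path_N_eq_partial_sums by simp
  have l: "len (wd xs) = len u" using path_len[OF p(1)] p(2) by simp
  have "path_elem i (wd xs)" using p unfolding path_elem_def by blast
  then have "excessive_cluster r A (N (wd xs)) (\<lambda>j. if j = i then len (wd xs) else 0)"
    by (rule excessive_cluster_if_path_elem[OF i])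
  then have "excessive_cluster r A (N u) (\<lambda>j. if j = i then len u else 0)"
    unfolding NN l .
  then show "path_elem i u" using path_elem_if_excessive_cluster[OF assms(1) i] by blast
next
  assume "path_elem i u"
  then obtain xs where xs: "is_path xs" "xs \<noteq> [] \<longrightarrow> xs ! 0 = i" "u = wd xs"
    unfolding path_elem_def by blast
  then have "path_seq i (len u) (partial_sums xs)"
    unfolding path_seq_iff using path_len by (intro exI[of _ xs]) auto
  moreover have "N u = {partial_sums xs ! j | j. j \<in> {1..len u}}"
    using xs path_N_eq_partial_sums path_len by simp
  ultimately show "\<exists>bs. path_seq i (len u) bs \<and> N u = {bs ! j | j. j \<in> {1..len u}}" by blast
qed

lemma path_seq_refl_prod_iff:
  "(\<exists>bs. path_seq i (len u) bs \<and> u = refl_prod r A bs) \<longleftrightarrow> path_elem i u"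
proof
  assume "\<exists>bs. path_seq i (len u) bs \<and> u = refl_prod r A bs"
  then obtain xs where "is_path xs" "xs \<noteq> [] \<longrightarrow> xs ! 0 = i" "u = refl_prod r A (partial_sums xs)"
    unfolding path_seq_iff by blast
  then show "path_elem i u" unfolding path_elem_def using refl_prod_partial_sums by auto
next
  assume "path_elem i u"
  then obtain xs where xs: "is_path xs" "xs \<noteq> [] \<longrightarrow> xs ! 0 = i" "u = wd xs"
    unfolding path_elem_def by blast
  then have "path_seq i (len u) (partial_sums xs)"
    unfolding path_seq_iff using path_len by (intro exI[of _ xs]) auto
  then show "\<exists>bs. path_seq i (len u) bs \<and> u = refl_prod r A bs"
    using xs refl_prod_partial_sums by auto
qed

lemma path_seq_partial_sums:
  assumes "path_seq i (len u) bs" and "N u = {bs ! j | j. j \<in> {1..len u}} \<or> u = refl_prod r A bs"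
  obtains xs where "is_path xs" "length xs = len u" "bs = partial_sums xs" "N (wd xs) = N u"
proof -
  obtain xs where xs: "is_path xs" "length xs = len u" "bs = partial_sums xs"
    using assms(1) unfolding path_seq_iff by blast
  moreover have "N (wd xs) = N u"
    using assms(2) path_N_eq_partial_sums[OF xs(1)] refl_prod_partial_sums[OF xs(1)] xs(2,3) by auto
  ultimately show thesis using that by blast
qed

lemma path_seq_unique:
  assumes "path_seq i (len u) bs" "N u = {bs ! j | j. j \<in> {1..len u}} \<or> u = refl_prod r A bs"
    and "path_seq i (len u) bs'" "N u = {bs' ! j | j. j \<in> {1..len u}} \<or> u = refl_prod r A bs'"
  shows "bs = bs'"
proof -
  obtain xs where xs: "is_path xs" "length xs = len u" "bs = partial_sums xs" "N (wd xs) = N u"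
    using path_seq_partial_sums[OF assms(1,2)] .
  obtain xs' where xs': "is_path xs'" "length xs' = len u" "bs' = partial_sums xs'" "N (wd xs') = N u"
    using path_seq_partial_sums[OF assms(3,4)] .
  show ?thesis using partial_sums_eq_if_N_eq[OF xs(1) xs'(1)] xs xs' by simp
qed

end

theorem mainTheorem9:
  fixes r :: nat and A :: "nat \<Rightarrow> nat \<Rightarrow> int" and w :: weyl and i :: nat
  assumes cartan: "simply_laced_cartan r A"
    and w: "w \<in> weyl_group r A"
    and i: "i < r"
  defines "n \<equiv> wlen r A w"
  defines "e \<equiv> (\<lambda>j. if j = i then n else 0)"
  defines "P4 \<equiv> (\<lambda>bs. path_originating r A bs \<and> length bs = n + 1 \<and>
                   (n > 0 \<longrightarrow> bs ! 1 = simple i) \<and>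
                   inv_set r A w = {bs ! j | j. j \<in> {1..n}})"
  defines "P5 \<equiv> (\<lambda>bs. path_originating r A bs \<and> length bs = n + 1 \<and>
                   (n > 0 \<longrightarrow> bs ! 1 = simple i) \<and>
                   w = refl_prod r A bs)"
  shows "(Ccoef r A w e = 1 \<longleftrightarrow> excessive_cluster r A (inv_set r A w) e)
       \<and> (excessive_cluster r A (inv_set r A w) e \<longleftrightarrow>
            A_config r A (inv_set r A w) e \<and> exc_clusterizable r A (inv_set r A w) e)
       \<and> ((A_config r A (inv_set r A w) e \<and> exc_clusterizable r A (inv_set r A w) e)
            \<longleftrightarrow> (\<exists>bs. P4 bs))
       \<and> ((\<exists>bs. P4 bs) \<longleftrightarrow> (\<exists>bs. P5 bs))
       \<and> (\<forall>bs bs'. (P4 bs \<or> P5 bs) \<and> (P4 bs' \<or> P5 bs') \<longrightarrow> bs = bs')"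
proof -
  interpret simply_laced r A by unfold_locales (rule cartan)
  have P4: "P4 bs \<longleftrightarrow> path_seq i (len w) bs \<and> N w = {bs ! j | j. j \<in> {1..len w}}" for bs
    unfolding P4_def path_seq_def n_def by auto
  have P5: "P5 bs \<longleftrightarrow> path_seq i (len w) bs \<and> w = refl_prod r A bs" for bs
    unfolding P5_def path_seq_def n_def by auto
  have "Ccoef r A w e = 1 \<longleftrightarrow> path_elem i w"
    using Ccoef_single_eq_Dpow[OF i] Dpow_len_eq_1_iff_path_elem[OF w] unfolding e_def n_def by simp
  moreover have "excessive_cluster r A (N w) e \<longleftrightarrow> path_elem i w"
    using excessive_cluster_if_path_elem[OF i] path_elem_if_excessive_cluster[OF w i]
    unfolding e_def n_def by blast
  moreover have "excessive_cluster r A (N w) e \<longleftrightarrow> A_config r A (N w) e \<and> exc_clusterizable r A (N w) e"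
    using exc_clusterizable_if_excessive_cluster[OF w i] excessive_cluster_if_exc_clusterizable[OF w i]
      single_tuple_on_N(1)[OF w i] N_subset_pos unfolding A_config_def e_def n_def by auto
  moreover have "(\<exists>bs. P4 bs) \<longleftrightarrow> path_elem i w" using path_seq_N_iff[OF w i] P4 by simp
  moreover have "(\<exists>bs. P5 bs) \<longleftrightarrow> path_elem i w" using path_seq_refl_prod_iff P5 by simp
  moreover have "(P4 bs \<or> P5 bs) \<and> (P4 bs' \<or> P5 bs') \<Longrightarrow> bs = bs'" for bs bs'
    using path_seq_unique[of i w bs bs'] P4 P5 by blast
  ultimately show ?thesis by blast
qed


end
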